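(* Let $d\ge1$, let $\mathcal{C}$ be the standard middle-thirds Cantor set and $\mathcal{K}=\mathcal{C}^d\subseteq\mathbb{R}^d$. Let $s=\dim_H(\mathcal{K})$ and let $\mu_{\mathcal{K}}$ be the restriction to $\mathcal{K}$ of the $s$-dimensional Hausdorff measure. Then $$\varpi:=\min_{1\le l\le d}\alpha_l(\mu_{\mathcal{K}})\,(d-l+1)=s=d\,\frac{\log2}{\log3}.$$
   Context: For a compactly supported Borel measure $\nu$ on $\mathbb{R}^d$ and $1\le l\le d$, let $\mathcal{A}(d,d-l)$ be the set of affine subspaces of $\mathbb{R}^d$ of dimension $d-l$, $\mathcal{L}^{(\varepsilon)}$ the open Euclidean $\varepsilon$-neighborhood of $\mathcal{L}$, and $$\alpha_l(\nu):=\liminf_{\varepsilon\to0}\frac{\log\sup_{\mathcal{L}\in\mathcal{A}(d,d-l)}\nu(\mathcal{L}^{(\varepsilon)})}{\log\varepsilon}.$$ *)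

theory Defs
  imports "HOL-Analysis.Analysis"
begin

definition cantor_set :: "real set" where
  "cantor_set = {x. \<exists>a::nat \<Rightarrow> nat. (\<forall>i. a i \<in> {0, 2}) \<and> x = (\<Sum>i. real (a i) / 3 ^ (i + 1))}"

text \<open>The d-fold product of the Cantor set, as a subset of real^'n (d = CARD('n)).\<close>
definition cantor_dust :: "(real ^ 'n) set" where
  "cantor_dust = {x. \<forall>i. x $ i \<in> cantor_set}"

text \<open>delta-approximation of the (unnormalised) s-dimensional Hausdorff outer measure.\<close>
definition hausdorff_pre :: "real \<Rightarrow> real \<Rightarrow> ('a::metric_space) set \<Rightarrow> ennreal" where
  "hausdorff_pre s \<delta> A = (INF U\<in>{U :: nat \<Rightarrow> 'a set. A \<subseteq> (\<Union>i. U i) \<and>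
        (\<forall>i. bounded (U i) \<and> diameter (U i) \<le> \<delta>)}.
        (\<Sum>i. ennreal (diameter (U i) powr s)))"

definition hausdorff_measure :: "real \<Rightarrow> ('a::metric_space) set \<Rightarrow> ennreal" where
  "hausdorff_measure s A = (SUP \<delta>\<in>{0<..}. hausdorff_pre s \<delta> A)"

definition hausdorff_dim :: "('a::metric_space) set \<Rightarrow> real" where
  "hausdorff_dim A = Inf {s. s \<ge> 0 \<and> hausdorff_measure s A = 0}"

definition affine_subspaces :: "nat \<Rightarrow> ('a::euclidean_space) set set" where
  "affine_subspaces k = {L. affine L \<and> L \<noteq> {} \<and> aff_dim L = int k}"

definition nbhd :: "('a::metric_space) set \<Rightarrow> real \<Rightarrow> 'a set" where
  "nbhd L \<epsilon> = (\<Union>y\<in>L. ball y \<epsilon>)"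

definition alpha :: "nat \<Rightarrow> (('a::euclidean_space) set \<Rightarrow> ennreal) \<Rightarrow> ereal" where
  "alpha l \<nu> = Liminf (at_right 0) (\<lambda>\<epsilon>::real.
      ereal (ln (enn2real (SUP L\<in>affine_subspaces (DIM('a) - l). \<nu> (nbhd L \<epsilon>))) / ln \<epsilon>))"

end

theory Submission
  imports Defs
begin

text \<open>
  The dust K is covered by its 2^(n d) level-n address cubes of side 3^-n. Hence
  H^s(A \<inter> K) \<le> d^s N_n(A) / 2^(n d) for s = d log 2 / log 3, where N_n(A) counts the cubes meeting A,
  and H^t(K) = 0 for t > s. Conversely, a set of diameter about 3^-k contains at most a fraction
  2^-(k d) of the level-N address points, and compactness reduces arbitrary covers to finite ones, so
  every level-n cube carries H^s-measure at least c / 2^(n d). Thus dim_H K = s.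

  For \<epsilon> \<approx> 3^-n the \<epsilon>-neighbourhood of a (d - l)-dimensional affine subspace meets at most
  C 2^(n (d - l)) level-n cubes, with C independent of the subspace, so its measure is O(\<epsilon>^(l s / d))
  and \<alpha>_l \<ge> l s / d. The \<epsilon>-ball around the origin has measure at least c \<epsilon>^s, so \<alpha>_d = s.
  As (l s / d) (d - l + 1) \<ge> s for 1 \<le> l \<le> d, the minimum is s, attained at l = d.
\<close>

lemma card_le_card_image_mult:
  assumes "finite A" "\<And>y. y \<in> f ` A \<Longrightarrow> card {x \<in> A. f x = y} \<le> b"
  shows "card A \<le> card (f ` A) * b"
proof -
  have "card A \<le> card (\<Union>y\<in>f ` A. {x \<in> A. f x = y})"
    using assms(1) by (intro card_mono) auto
  also have "\<dots> \<le> (\<Sum>y\<in>f ` A. card {x \<in> A. f x = y})"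
    using assms(1) by (intro card_UN_le) auto
  also have "\<dots> \<le> card (f ` A) * b"
    using sum_bounded_above[of "f ` A" "\<lambda>y. card {x \<in> A. f x = y}" b] assms(2) by auto
  finally show ?thesis .
qed

lemma card_separated_le:
  fixes S :: "real set"
  assumes sep: "\<And>x y. x \<in> S \<Longrightarrow> y \<in> S \<Longrightarrow> x \<noteq> y \<Longrightarrow> h \<le> \<bar>x - y\<bar>"
    and "0 < h" "S \<subseteq> {a..a + k * h}"
  shows "card S \<le> k + 1"
proof -
  let ?g = "\<lambda>x. nat \<lfloor>(x - a) / h\<rfloor>"
  have range: "0 \<le> (x - a) / h \<and> (x - a) / h \<le> k" if "x \<in> S" for x
  proof -
    have "a \<le> x" "x - a \<le> k * h"
      using \<open>S \<subseteq> {a..a + k * h}\<close> that by auto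
    then show ?thesis
      using \<open>0 < h\<close> by (simp add: pos_divide_le_eq)
  qed
  have "inj_on ?g S"
  proof (rule inj_onI, rule ccontr)
    fix x y
    assume xy: "x \<in> S" "y \<in> S" "?g x = ?g y" "x \<noteq> y"
    then have "\<lfloor>(x - a) / h\<rfloor> = \<lfloor>(y - a) / h\<rfloor>"
      using range by (simp add: nat_eq_iff2)
    then have "\<bar>(x - a) / h - (y - a) / h\<bar> < 1"
      by linarith
    then have "\<bar>x - y\<bar> < h"
      using \<open>0 < h\<close> by (simp add: diff_divide_distrib[symmetric] abs_divide)
    then show False
      using sep[OF xy(1,2,4)] by simp
  qed
  moreover have "?g ` S \<subseteq> {0..k}"
  proof
    fix z
    assume "z \<in> ?g ` S"
    then obtain x where "x \<in> S" "z = ?g x"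
      by blast
    then have "\<lfloor>(x - a) / h\<rfloor> \<le> \<lfloor>real k\<rfloor>"
      using range by (intro floor_mono) blast
    then show "z \<in> {0..k}"
      using \<open>z = ?g x\<close> by simp
  qed
  ultimately show ?thesis
    using card_inj_on_le[of ?g S "{0..k}"] by simp
qed

lemma sums_two_over_pow3: "(\<lambda>i. 2 / 3 ^ Suc (i + m) :: real) sums (1 / 3 ^ m)"
proof -
  have "(\<lambda>i. 2 / 3 ^ Suc m * (1 / 3) ^ i :: real) sums (2 / 3 ^ Suc m * (1 / (1 - 1 / 3)))"
    by (intro sums_mult geometric_sums) simp
  moreover have "(\<lambda>i. 2 / 3 ^ Suc m * (1 / 3) ^ i :: real) = (\<lambda>i. 2 / 3 ^ Suc (i + m))"
    by (simp add: power_add power_one_over field_simps)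
  moreover have "2 / 3 ^ Suc m * (1 / (1 - 1 / 3)) = (1 / 3 ^ m :: real)"
    by simp
  ultimately show ?thesis by simp
qed

lemma exists_pow3_bracket:
  fixes x :: real
  assumes "0 < x" "x < 1"
  obtains k where "1 / 3 ^ Suc k \<le> x" "x < 1 / 3 ^ k"
proof -
  obtain n\<^sub>0 :: nat where "(1 / 3) ^ n\<^sub>0 < x"
    using real_arch_pow_inv[OF assms(1), of "1 / 3"] by auto
  then have "\<exists>n. 1 / 3 ^ n \<le> x"
    by (auto simp: power_one_over intro: less_imp_le)
  then obtain n where n: "1 / 3 ^ n \<le> x" and least: "\<And>i. i < n \<Longrightarrow> \<not> 1 / 3 ^ i \<le> x"
    unfolding exists_least_iff[of "\<lambda>n. 1 / 3 ^ n \<le> x"] by blast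
  have "n \<noteq> 0"
  proof
    assume "n = 0"
    then show False
      using n assms(2) by simp
  qed
  then obtain k where "n = Suc k"
    using not0_implies_Suc by blast
  then show ?thesis
    using that n least[of k] by simp
qed

lemma eventually_div_pow3_le:
  assumes "0 < \<delta>"
  shows "eventually (\<lambda>m. c / 3 ^ m \<le> (\<delta>::real)) sequentially"
proof -
  have "eventually (\<lambda>m. c / 3 ^ m < \<delta>) sequentially"
    using order_tendstoD(2)[OF LIMSEQ_divide_realpow_zero assms, of 3 c] by simp
  then show ?thesis
    by (rule eventually_mono) simp
qed

lemma sum_div_pow2_Suc_le:
  assumes "finite F" "0 \<le> \<eta>"
  shows "(\<Sum>j\<in>F. \<eta> / 2 ^ Suc j) \<le> (\<eta>::real)"
proof -
  have sums: "(\<lambda>j. \<eta> * (1 / 2) ^ Suc j) sums \<eta>"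
    using sums_mult[OF power_half_series, of \<eta>] by simp
  have "(\<Sum>j\<in>F. \<eta> * (1 / 2) ^ Suc j) \<le> (\<Sum>j. \<eta> * (1 / 2) ^ Suc j)"
    by (rule sum_le_suminf[OF sums_summable[OF sums] assms(1)]) (simp add: assms(2))
  also have "\<dots> = \<eta>"
    using sums by (rule sums_unique[symmetric])
  finally show ?thesis
    by (simp add: power_one_over)
qed

lemma power_powr_swap: "0 < x \<Longrightarrow> ((x::real) ^ m) powr t = (x powr t) ^ m"
proof -
  assume "0 < x"
  then have "(x ^ m) powr t = (x powr real m) powr t"
    by (simp add: powr_realpow)
  also have "\<dots> = (x powr t) powr real m"
    by (rule powr_powr_swap)
  also have "\<dots> = (x powr t) ^ m"
    using \<open>0 < x\<close> by (simp add: powr_realpow)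
  finally show ?thesis .
qed

lemma Liminf_plus_div_ln: "Liminf (at_right 0) (\<lambda>\<epsilon>::real. ereal (e + c / ln \<epsilon>)) = ereal e"
proof -
  have "((\<lambda>\<epsilon>::real. c / ln \<epsilon>) \<longlongrightarrow> 0) (at_right 0)"
    by (rule tendsto_divide_0[OF tendsto_const filterlim_mono[OF ln_at_0 at_bot_le_at_infinity order_refl]])
  then have "((\<lambda>\<epsilon>. ereal (e + c / ln \<epsilon>)) \<longlongrightarrow> ereal e) (at_right 0)"
    using tendsto_add[OF tendsto_const[of e]] by fastforce
  then show ?thesis
    by (rule lim_imp_Liminf[rotated]) simp
qed

lemma eventually_in_unit_interval: "eventually (\<lambda>\<epsilon>::real. 0 < \<epsilon> \<and> \<epsilon> < 1) (at_right 0)"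
  by (subst eventually_at_right[of 0 1]) (auto intro!: exI[of _ 1])

lemma Liminf_ln_div_ln_ge:
  fixes \<phi> :: "real \<Rightarrow> real"
  assumes bound: "\<And>\<epsilon>. 0 < \<epsilon> \<Longrightarrow> \<epsilon> < 1 \<Longrightarrow> 0 < \<phi> \<epsilon> \<and> \<phi> \<epsilon> \<le> C * \<epsilon> powr e"
  shows "ereal e \<le> Liminf (at_right 0) (\<lambda>\<epsilon>. ereal (ln (\<phi> \<epsilon>) / ln \<epsilon>))"
proof -
  have "Liminf (at_right 0) (\<lambda>\<epsilon>. ereal (e + ln C / ln \<epsilon>))
      \<le> Liminf (at_right 0) (\<lambda>\<epsilon>. ereal (ln (\<phi> \<epsilon>) / ln \<epsilon>))"
  proof (intro Liminf_mono eventually_mono[OF eventually_in_unit_interval])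
    fix \<epsilon> :: real
    assume \<epsilon>: "0 < \<epsilon> \<and> \<epsilon> < 1"
    then have "0 < \<phi> \<epsilon>" "\<phi> \<epsilon> \<le> C * \<epsilon> powr e"
      using bound by auto
    then have "0 < C"
      using \<epsilon> by (smt (verit) powr_gt_zero zero_less_mult_iff)
    have "ln (\<phi> \<epsilon>) \<le> ln (C * \<epsilon> powr e)"
      using \<open>0 < \<phi> \<epsilon>\<close> \<open>\<phi> \<epsilon> \<le> C * \<epsilon> powr e\<close> by simp
    also have "\<dots> = ln C + e * ln \<epsilon>"
      using \<open>0 < C\<close> \<epsilon> by (simp add: ln_mult ln_powr)
    finally have "(ln C + e * ln \<epsilon>) / ln \<epsilon> \<le> ln (\<phi> \<epsilon>) / ln \<epsilon>"
      using \<epsilon> by (intro divide_right_mono_neg) auto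
    then show "ereal (e + ln C / ln \<epsilon>) \<le> ereal (ln (\<phi> \<epsilon>) / ln \<epsilon>)"
      using \<epsilon> by (simp add: add_divide_distrib)
  qed
  then show ?thesis
    by (simp only: Liminf_plus_div_ln)
qed

lemma Liminf_ln_div_ln_le:
  fixes \<phi> :: "real \<Rightarrow> real"
  assumes bound: "\<And>\<epsilon>. 0 < \<epsilon> \<Longrightarrow> \<epsilon> < 1 \<Longrightarrow> c * \<epsilon> powr e \<le> \<phi> \<epsilon>" and "0 < c"
  shows "Liminf (at_right 0) (\<lambda>\<epsilon>. ereal (ln (\<phi> \<epsilon>) / ln \<epsilon>)) \<le> ereal e"
proof -
  have "Liminf (at_right 0) (\<lambda>\<epsilon>. ereal (ln (\<phi> \<epsilon>) / ln \<epsilon>))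
      \<le> Liminf (at_right 0) (\<lambda>\<epsilon>. ereal (e + ln c / ln \<epsilon>))"
  proof (intro Liminf_mono eventually_mono[OF eventually_in_unit_interval])
    fix \<epsilon> :: real
    assume \<epsilon>: "0 < \<epsilon> \<and> \<epsilon> < 1"
    have "ln c + e * ln \<epsilon> = ln (c * \<epsilon> powr e)"
      using \<open>0 < c\<close> \<epsilon> by (simp add: ln_mult ln_powr)
    also have "\<dots> \<le> ln (\<phi> \<epsilon>)"
      using bound[of \<epsilon>] \<open>0 < c\<close> \<epsilon> by (intro ln_mono) auto
    finally have "ln (\<phi> \<epsilon>) / ln \<epsilon> \<le> (ln c + e * ln \<epsilon>) / ln \<epsilon>"
      using \<epsilon> by (intro divide_right_mono_neg) auto
    then show "ereal (ln (\<phi> \<epsilon>) / ln \<epsilon>) \<le> ereal (e + ln c / ln \<epsilon>)"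
      using \<epsilon> by (simp add: add_divide_distrib)
  qed
  then show ?thesis
    by (simp only: Liminf_plus_div_ln)
qed

section \<open>Hausdorff measure\<close>

lemma hausdorff_pre_mono: "A \<subseteq> B \<Longrightarrow> hausdorff_pre t \<delta> A \<le> hausdorff_pre t \<delta> B"
  unfolding hausdorff_pre_def by (rule INF_superset_mono) auto

lemma hausdorff_measure_mono: "A \<subseteq> B \<Longrightarrow> hausdorff_measure t A \<le> hausdorff_measure t B"
  unfolding hausdorff_measure_def by (intro SUP_mono' hausdorff_pre_mono)

lemma hausdorff_pre_exponent_antimono:
  assumes "t \<le> s" "\<delta> \<le> 1"
  shows "hausdorff_pre s \<delta> A \<le> hausdorff_pre t \<delta> A"
  unfolding hausdorff_pre_def
proof (rule INF_mono)
  fix U :: "nat \<Rightarrow> 'a set"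
  assume U: "U \<in> {U. A \<subseteq> (\<Union>i. U i) \<and> (\<forall>i. bounded (U i) \<and> diameter (U i) \<le> \<delta>)}"
  have "diameter (U i) powr s \<le> diameter (U i) powr t" for i
  proof -
    have "bounded (U i)" "diameter (U i) \<le> \<delta>"
      using U by auto
    then show ?thesis
      using assms diameter_ge_0[of "U i"] by (intro powr_mono') auto
  qed
  then have "(\<Sum>i. ennreal (diameter (U i) powr s)) \<le> (\<Sum>i. ennreal (diameter (U i) powr t))"
    by (intro suminf_le ennreal_leI) auto
  then show "\<exists>V\<in>{U. A \<subseteq> (\<Union>i. U i) \<and> (\<forall>i. bounded (U i) \<and> diameter (U i) \<le> \<delta>)}.
      (\<Sum>i. ennreal (diameter (V i) powr s)) \<le> (\<Sum>i. ennreal (diameter (U i) powr t))"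
    using U by blast
qed

lemma hausdorff_pre_le_finite_cover:
  fixes U :: "'i \<Rightarrow> 'a::metric_space set"
  assumes "finite I" "A \<subseteq> (\<Union>i\<in>I. U i)" "\<And>i. i \<in> I \<Longrightarrow> bounded (U i) \<and> diameter (U i) \<le> \<delta>"
    and "0 \<le> \<delta>"
  shows "hausdorff_pre t \<delta> A \<le> (\<Sum>i\<in>I. ennreal (diameter (U i) powr t))"
proof -
  obtain h where h: "bij_betw h {0..<card I} I"
    using ex_bij_betw_nat_finite[OF assms(1)] by blast
  define V where "V k = (if k < card I then U (h k) else {})" for k
  have "A \<subseteq> (\<Union>k. V k)"
  proof
    fix x assume "x \<in> A"
    then obtain i where "i \<in> I" "x \<in> U i"
      using assms(2) by blast
    then obtain k where "k < card I" "h k = i"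
      using h by (metis atLeastLessThan_iff bij_betw_def imageE)
    then show "x \<in> (\<Union>k. V k)"
      using \<open>x \<in> U i\<close> by (auto simp: V_def)
  qed
  moreover have "bounded (V k) \<and> diameter (V k) \<le> \<delta>" for k
    using assms(3,4) bij_betwE[OF h] by (auto simp: V_def)
  ultimately have "hausdorff_pre t \<delta> A \<le> (\<Sum>k. ennreal (diameter (V k) powr t))"
    unfolding hausdorff_pre_def by (intro INF_lower) auto
  also have "\<dots> = (\<Sum>k<card I. ennreal (diameter (V k) powr t))"
    by (rule suminf_finite) (auto simp: V_def)
  also have "\<dots> = (\<Sum>k\<in>{0..<card I}. ennreal (diameter (U (h k)) powr t))"
    by (intro sum.cong) (auto simp: V_def)
  also have "\<dots> = (\<Sum>i\<in>I. ennreal (diameter (U i) powr t))"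
    by (rule sum.reindex_bij_betw[OF h])
  finally show ?thesis .
qed

lemma exists_ball_cover_powr:
  fixes U :: "nat \<Rightarrow> 'a::metric_space set"
  assumes "\<And>j. bounded (U j)" "0 < s" "0 < \<eta>"
  obtains c r where "\<And>j. U j \<subseteq> ball (c j) (r j)" "\<And>j. 0 < r j"
    "\<And>j. (2 * r j) powr s \<le> 4 powr s * diameter (U j) powr s + \<eta> / 2 ^ Suc j"
proof -
  define r where "r j = (if 0 < diameter (U j) then 2 * diameter (U j) else (\<eta> / 2 ^ Suc j) powr (1 / s) / 2)"
    for j
  define c where "c j = (SOME x. x \<in> U j)" for j
  have r_pos: "0 < r j" for j
    using assms(3) by (simp add: r_def)
  have "U j \<subseteq> ball (c j) (r j)" for j
  proof
    fix y
    assume y: "y \<in> U j"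
    then have "c j \<in> U j"
      unfolding c_def by (rule someI)
    then have "dist (c j) y \<le> diameter (U j)"
      using diameter_bounded_bound[OF assms(1) _ y] by blast
    moreover have "diameter (U j) < r j"
    proof (cases "0 < diameter (U j)")
      case False
      then have "diameter (U j) = 0"
        using diameter_ge_0[OF assms(1)[of j]] by linarith
      then show ?thesis
        using r_pos[of j] by simp
    qed (simp add: r_def)
    ultimately show "y \<in> ball (c j) (r j)"
      by simp
  qed
  moreover have "(2 * r j) powr s \<le> 4 powr s * diameter (U j) powr s + \<eta> / 2 ^ Suc j" for j
  proof (cases "0 < diameter (U j)")
    case True
    then have "(2 * r j) powr s = 4 powr s * diameter (U j) powr s"
      by (simp add: r_def powr_mult)
    then show ?thesis
      using assms(3) by simp
  next
    case False
    then have "(2 * r j) powr s = \<eta> / 2 ^ Suc j"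
      using assms(2,3) by (simp add: r_def powr_powr)
    then show ?thesis
      by simp
  qed
  ultimately show ?thesis
    using that r_pos by blast
qed

section \<open>Ternary expansions and the Cantor set\<close>

definition ternary_value :: "(nat \<Rightarrow> real) \<Rightarrow> real" where
  "ternary_value f = (\<Sum>i. f i / 3 ^ Suc i)"

definition cantor_point :: "nat set \<Rightarrow> real" where
  "cantor_point B = ternary_value (\<lambda>i. if i \<in> B then 2 else 0)"

lemma ternary_value_bounds:
  assumes digits: "\<And>i. f i \<in> {0..2}"
  shows "(\<Sum>i<m. f i / 3 ^ Suc i) \<le> ternary_value f"
    and "ternary_value f \<le> (\<Sum>i<m. f i / 3 ^ Suc i) + 1 / 3 ^ m"
proof -
  let ?tail = "\<lambda>i. f (i + m) / 3 ^ Suc (i + m)"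
  have tail_le: "?tail i \<le> 2 / 3 ^ Suc (i + m)" for i
    using digits[of "i + m"] by (simp add: divide_right_mono)
  have tail_nonneg: "0 \<le> ?tail i" for i
    using digits[of "i + m"] by simp
  have summable_tail: "summable ?tail"
    by (rule summable_comparison_test'[OF sums_summable[OF sums_two_over_pow3[of m]]])
      (simp only: real_norm_def abs_of_nonneg[OF tail_nonneg] tail_le)
  then have split: "ternary_value f = (\<Sum>i. ?tail i) + (\<Sum>i<m. f i / 3 ^ Suc i)"
    unfolding ternary_value_def
    by (intro suminf_split_initial_segment) (simp only: summable_iff_shift[of "\<lambda>i. f i / 3 ^ Suc i" m, symmetric])
  have "0 \<le> (\<Sum>i. ?tail i)"
    using summable_tail tail_nonneg by (rule suminf_nonneg)
  moreover have "(\<Sum>i. ?tail i) \<le> 1 / 3 ^ m"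
    by (rule sums_le[OF tail_le summable_sums[OF summable_tail] sums_two_over_pow3])
  ultimately show "(\<Sum>i<m. f i / 3 ^ Suc i) \<le> ternary_value f"
    and "ternary_value f \<le> (\<Sum>i<m. f i / 3 ^ Suc i) + 1 / 3 ^ m"
    using split by linarith+
qed

lemma cantor_point_truncate:
  "cantor_point (B \<inter> {..<m}) = (\<Sum>i<m. (if i \<in> B then 2 else 0) / 3 ^ Suc i)"
  unfolding cantor_point_def ternary_value_def by (subst suminf_finite[of "{..<m}"]) auto

lemma cantor_point_truncate_bounds:
  "cantor_point (B \<inter> {..<m}) \<le> cantor_point B"
  "cantor_point B \<le> cantor_point (B \<inter> {..<m}) + 1 / 3 ^ m"
  unfolding cantor_point_truncate
  using ternary_value_bounds[of "\<lambda>i. if i \<in> B then 2 else 0" m]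
  by (simp_all add: cantor_point_def)

lemma cantor_point_empty [simp]: "cantor_point {} = 0"
  using cantor_point_truncate[of "{}" 0] by simp

lemma cantor_point_bounds: "0 \<le> cantor_point B" "cantor_point B \<le> 1"
  using cantor_point_truncate_bounds[of B 0] by simp_all

lemma cantor_point_truncate_Suc:
  "cantor_point (B \<inter> {..<Suc j}) = cantor_point (B \<inter> {..<j}) + (if j \<in> B then 2 / 3 ^ Suc j else 0)"
  by (simp add: cantor_point_truncate)

lemma cantor_point_separation:
  assumes "B \<inter> {..<k} \<noteq> B' \<inter> {..<k}"
  shows "1 / 3 ^ k \<le> \<bar>cantor_point B - cantor_point B'\<bar>"
proof -
  have first_digit_decides: "cantor_point B\<^sub>2 + 1 / 3 ^ Suc j \<le> cantor_point B\<^sub>1"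
    if "j \<in> B\<^sub>1" "j \<notin> B\<^sub>2" "B\<^sub>1 \<inter> {..<j} = B\<^sub>2 \<inter> {..<j}" for j B\<^sub>1 B\<^sub>2
    using that cantor_point_truncate_Suc[of B\<^sub>1 j] cantor_point_truncate_Suc[of B\<^sub>2 j]
      cantor_point_truncate_bounds(1)[of B\<^sub>1 "Suc j"] cantor_point_truncate_bounds(2)[of B\<^sub>2 "Suc j"]
    by simp
  have "\<exists>j. j < k \<and> (j \<in> B \<longleftrightarrow> j \<notin> B')"
    using assms by auto
  then obtain j where j: "j < k" "j \<in> B \<longleftrightarrow> j \<notin> B'"
    and least: "\<And>i. i < j \<Longrightarrow> \<not> (i < k \<and> (i \<in> B \<longleftrightarrow> i \<notin> B'))"
    unfolding exists_least_iff[of "\<lambda>j. j < k \<and> (j \<in> B \<longleftrightarrow> j \<notin> B')"] by blast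
  have "B \<inter> {..<j} = B' \<inter> {..<j}"
    using least j(1) by auto
  then have "1 / 3 ^ Suc j \<le> \<bar>cantor_point B - cantor_point B'\<bar>"
    using j(2) first_digit_decides[of j B B'] first_digit_decides[of j B' B] by fastforce
  moreover have "1 / (3::real) ^ k \<le> 1 / 3 ^ Suc j"
    using j(1) by (intro divide_left_mono power_increasing) auto
  ultimately show ?thesis by linarith
qed

lemma cantor_set_eq_range: "cantor_set = range cantor_point"
proof (intro equalityI subsetI)
  fix x assume "x \<in> cantor_set"
  then obtain a :: "nat \<Rightarrow> nat" where a: "\<forall>i. a i \<in> {0, 2}" "x = (\<Sum>i. real (a i) / 3 ^ (i + 1))"
    unfolding cantor_set_def by blast
  have "(\<lambda>i. real (a i) / 3 ^ (i + 1)) = (\<lambda>i. (if i \<in> {i. a i = 2} then 2 else 0) / 3 ^ Suc i)"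
    using a(1) by (force simp: fun_eq_iff)
  then have "x = cantor_point {i. a i = 2}"
    using a(2) by (simp add: cantor_point_def ternary_value_def)
  then show "x \<in> range cantor_point" by blast
next
  fix x assume "x \<in> range cantor_point"
  then obtain B where "x = cantor_point B" by blast
  moreover have "(\<lambda>i. (if i \<in> B then 2 else 0) / 3 ^ Suc i) = (\<lambda>i. real (if i \<in> B then 2 else 0) / 3 ^ (i + 1))"
    by (simp add: fun_eq_iff)
  ultimately show "x \<in> cantor_set"
    unfolding cantor_set_def cantor_point_def ternary_value_def
    by (intro CollectI exI[of _ "\<lambda>i. if i \<in> B then 2 else 0"]) simp
qed

lemma continuous_on_ternary_value: "continuous_on {f. \<forall>i. f i \<in> {0..2}} ternary_value"
proof -
  let ?D = "{f :: nat \<Rightarrow> real. \<forall>i. f i \<in> {0..2}}"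
  have "uniform_limit ?D (\<lambda>n f. \<Sum>i<n. f i / 3 ^ Suc i) ternary_value sequentially"
    unfolding ternary_value_def
  proof (rule Weierstrass_m_test)
    show "summable (\<lambda>i. 2 / 3 ^ Suc (i + 0) :: real)"
      using sums_summable[OF sums_two_over_pow3] .
  qed (auto simp: divide_right_mono)
  moreover have "\<forall>\<^sub>F n in sequentially. continuous_on ?D (\<lambda>f. \<Sum>i<n. f i / 3 ^ Suc i)"
    by (intro always_eventually allI continuous_intros
        continuous_on_subset[OF continuous_on_product_coordinates]) auto
  ultimately show ?thesis
    by (intro uniform_limit_theorem) auto
qed

lemma compact_cantor_set: "compact cantor_set"
proof -
  let ?D = "PiE UNIV (\<lambda>_. {0, 2 :: real})"
  have "compactin (product_topology (\<lambda>_. euclidean) UNIV) ?D"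
    by (subst compactin_PiE) auto
  then have "compact ?D"
    by (simp add: euclidean_product_topology)
  moreover have "continuous_on ?D ternary_value"
  proof (rule continuous_on_subset[OF continuous_on_ternary_value])
    show "?D \<subseteq> {f. \<forall>i. f i \<in> {0..2}}"
      by (auto simp: PiE_iff) (metis order.refl zero_le_numeral)+
  qed
  moreover have "cantor_set = ternary_value ` ?D"
  proof -
    have "cantor_point B \<in> ternary_value ` ?D" for B
      unfolding cantor_point_def by (rule imageI) (simp add: PiE_iff)
    moreover have "f \<in> ?D \<Longrightarrow> ternary_value f = cantor_point {i. f i = 2}" for f
      unfolding cantor_point_def by (intro arg_cong[where f = ternary_value]) (force simp: fun_eq_iff PiE_iff)
    ultimately show ?thesis
      unfolding cantor_set_eq_range by blast
  qed
  ultimately show ?thesis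
    by (metis compact_continuous_image)
qed

lemma compact_cantor_dust: "compact (cantor_dust :: (real ^ 'n) set)"
proof -
  have "closed {x :: real ^ 'n. x $ i \<in> cantor_set}" for i
    using continuous_closed_vimage[OF compact_imp_closed[OF compact_cantor_set], of "\<lambda>x. x $ i"]
    by (simp add: vimage_def continuous_on_component)
  then have "closed (cantor_dust :: (real ^ 'n) set)"
    unfolding cantor_dust_def by (rule closed_Collect_all)
  moreover have "bounded (cantor_dust :: (real ^ 'n) set)"
  proof (rule bounded_subset[OF bounded_cbox])
    show "cantor_dust \<subseteq> cbox (0 :: real ^ 'n) 1"
      by (auto simp: cantor_dust_def cantor_set_eq_range mem_box_cart) (metis cantor_point_bounds rangeE)+
  qed
  ultimately show ?thesis
    by (simp add: compact_eq_bounded_closed)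
qed

section \<open>Addresses in the Cantor dust\<close>

text \<open>A level-n address records, for each coordinate, the positions below n of the ternary digit 2;
  the dust points with these leading digits lie in the cube \<open>address_cube n \<beta>\<close> of side 3^-n.\<close>
definition addresses :: "nat \<Rightarrow> ('n \<Rightarrow> nat set) set" where
  "addresses n = {\<beta>. \<forall>i. \<beta> i \<subseteq> {..<n}}"

definition extensions :: "nat \<Rightarrow> nat \<Rightarrow> ('n \<Rightarrow> nat set) \<Rightarrow> ('n \<Rightarrow> nat set) set" where
  "extensions N n \<beta> = {\<alpha> \<in> addresses N. \<forall>i. \<alpha> i \<inter> {..<n} = \<beta> i}"

definition dust_point :: "('n \<Rightarrow> nat set) \<Rightarrow> real ^ 'n" where
  "dust_point \<beta> = (\<chi> i. cantor_point (\<beta> i))"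

definition address_cube :: "nat \<Rightarrow> ('n \<Rightarrow> nat set) \<Rightarrow> (real ^ 'n) set" where
  "address_cube n \<beta> = {x. \<forall>i. cantor_point (\<beta> i) \<le> x $ i \<and> x $ i \<le> cantor_point (\<beta> i) + 1 / 3 ^ n}"

text \<open>The digit set of a coordinate is picked by \<open>SOME\<close>.\<close>
definition dust_address :: "nat \<Rightarrow> real ^ 'n \<Rightarrow> ('n \<Rightarrow> nat set)" where
  "dust_address n x = (\<lambda>i. (SOME B. x $ i = cantor_point B) \<inter> {..<n})"

lemma addresses_eq_PiE: "addresses n = UNIV \<rightarrow>\<^sub>E Pow {..<n}"
  by (auto simp: addresses_def PiE_UNIV_domain)

lemma finite_addresses: "finite (addresses n :: ('n::finite \<Rightarrow> nat set) set)"
  unfolding addresses_eq_PiE by (intro finite_PiE) auto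

lemma card_addresses: "card (addresses n :: ('n::finite \<Rightarrow> nat set) set) = 2 ^ (n * CARD('n))"
  unfolding addresses_eq_PiE by (simp add: card_PiE card_Pow power_mult)

lemma finite_extensions: "finite (extensions N n \<beta> :: ('n::finite \<Rightarrow> nat set) set)"
  unfolding extensions_def by (rule finite_subset[OF _ finite_addresses]) auto

lemma card_extensions:
  fixes \<gamma> :: "'n::finite \<Rightarrow> nat set"
  assumes "k \<le> N" "\<gamma> \<in> addresses k"
  shows "card (extensions N k \<gamma>) = 2 ^ ((N - k) * CARD('n))"
proof -
  let ?P = "UNIV \<rightarrow>\<^sub>E Pow {k..<N} :: ('n \<Rightarrow> nat set) set"
  have "bij_betw (\<lambda>\<delta> i. \<gamma> i \<union> \<delta> i) ?P (extensions N k \<gamma>)"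
  proof (rule bij_betw_byWitness[where f' = "\<lambda>\<alpha> i. \<alpha> i \<inter> {k..<N}"])
    show "\<forall>\<delta>\<in>?P. (\<lambda>i. (\<gamma> i \<union> \<delta> i) \<inter> {k..<N}) = \<delta>"
      using assms(2) by (fastforce simp: addresses_def PiE_iff)
    show "\<forall>\<alpha>\<in>extensions N k \<gamma>. (\<lambda>i. \<gamma> i \<union> \<alpha> i \<inter> {k..<N}) = \<alpha>"
      by (fastforce simp: extensions_def addresses_def)
    show "(\<lambda>\<delta> i. \<gamma> i \<union> \<delta> i) ` ?P \<subseteq> extensions N k \<gamma>"
      using assms by (fastforce simp: extensions_def addresses_def PiE_iff)
    show "(\<lambda>\<alpha> i. \<alpha> i \<inter> {k..<N}) ` extensions N k \<gamma> \<subseteq> ?P"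
      by auto
  qed
  then have "card (extensions N k \<gamma>) = card ?P"
    by (simp add: bij_betw_same_card)
  also have "\<dots> = 2 ^ ((N - k) * CARD('n))"
    by (simp add: card_PiE card_Pow power_mult)
  finally show ?thesis .
qed

lemma dust_address_in_addresses: "dust_address n x \<in> addresses n"
  by (auto simp: dust_address_def addresses_def)

lemma dust_address_truncate:
  "n \<le> m \<Longrightarrow> dust_address m x i \<inter> {..<n} = dust_address n x i"
  by (auto simp: dust_address_def)

lemma dust_point_in_cantor_dust: "dust_point \<alpha> \<in> cantor_dust"
  by (simp add: dust_point_def cantor_dust_def cantor_set_eq_range)

lemma dust_point_in_address_cube:
  "(\<And>i. \<alpha> i \<inter> {..<n} = \<beta> i) \<Longrightarrow> dust_point \<alpha> \<in> address_cube n \<beta>"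
  using cantor_point_truncate_bounds[of "\<alpha> _" n]
  by (auto simp: dust_point_def address_cube_def)

lemma in_address_cube_dust_address:
  assumes "x \<in> cantor_dust"
  shows "x \<in> address_cube n (dust_address n x)"
proof -
  have "\<exists>B. x $ i = cantor_point B" for i
    using assms by (auto simp: cantor_dust_def cantor_set_eq_range)
  then have "x $ i = cantor_point (SOME B. x $ i = cantor_point B)" for i
    by (rule someI_ex)
  then show ?thesis
    using cantor_point_truncate_bounds[of "SOME B. x $ _ = cantor_point B" n]
    by (auto simp: address_cube_def dust_address_def)
qed

lemma dist_le_in_address_cube:
  fixes x y :: "real ^ 'n::finite"
  assumes "x \<in> address_cube n \<beta>" "y \<in> address_cube n \<beta>"
  shows "dist x y \<le> CARD('n) / 3 ^ n"
proof -
  have "dist x y \<le> (\<Sum>i\<in>UNIV. \<bar>(x - y) $ i\<bar>)"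
    unfolding dist_norm by (rule norm_le_l1_cart)
  also have "\<dots> \<le> (\<Sum>i\<in>(UNIV :: 'n set). 1 / 3 ^ n)"
  proof (rule sum_mono)
    fix i
    have "cantor_point (\<beta> i) \<le> x $ i" "x $ i \<le> cantor_point (\<beta> i) + 1 / 3 ^ n"
      "cantor_point (\<beta> i) \<le> y $ i" "y $ i \<le> cantor_point (\<beta> i) + 1 / 3 ^ n"
      using assms by (simp_all add: address_cube_def)
    then show "\<bar>(x - y) $ i\<bar> \<le> 1 / 3 ^ n"
      by simp
  qed
  finally show ?thesis
    by simp
qed

lemma diameter_address_cube: "diameter (address_cube n \<beta> :: (real ^ 'n::finite) set) \<le> CARD('n) / 3 ^ n"
  by (rule diameter_le) (auto simp flip: dist_norm intro: dist_le_in_address_cube)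

lemma bounded_address_cube: "bounded (address_cube n \<beta> :: (real ^ 'n::finite) set)"
proof -
  have "dust_point \<beta> \<in> address_cube n \<beta>"
    by (simp add: dust_point_def address_cube_def)
  then show ?thesis
    unfolding bounded_def by (blast intro: dist_le_in_address_cube)
qed

lemma closed_address_cube: "closed (address_cube n \<beta> :: (real ^ 'n::finite) set)"
  unfolding address_cube_def
  by (intro closed_Collect_all closed_Collect_conj closed_Collect_le continuous_intros)

lemma card_dust_address_refine:
  fixes S :: "(real ^ 'n::finite) set"
  assumes "n \<le> m"
  shows "card (dust_address m ` S) \<le> card (dust_address n ` S) * 2 ^ ((m - n) * CARD('n))"
proof -
  let ?trunc = "\<lambda>\<beta> :: 'n \<Rightarrow> nat set. \<lambda>i. \<beta> i \<inter> {..<n}"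
  have image: "?trunc ` dust_address m ` S = dust_address n ` S"
    unfolding image_image by (simp add: dust_address_truncate[OF assms])
  have "finite (dust_address m ` S)"
    by (rule finite_subset[OF _ finite_addresses[of m]]) (auto simp: dust_address_in_addresses)
  moreover have "card {\<alpha> \<in> dust_address m ` S. ?trunc \<alpha> = \<gamma>} \<le> 2 ^ ((m - n) * CARD('n))"
    if "\<gamma> \<in> dust_address n ` S" for \<gamma>
  proof -
    have "{\<alpha> \<in> dust_address m ` S. ?trunc \<alpha> = \<gamma>} \<subseteq> extensions m n \<gamma>"
      by (auto simp: extensions_def dust_address_in_addresses)
    then have "card {\<alpha> \<in> dust_address m ` S. ?trunc \<alpha> = \<gamma>} \<le> card (extensions m n \<gamma>)"
      by (rule card_mono[OF finite_extensions])
    also have "\<dots> = 2 ^ ((m - n) * CARD('n))"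
      using that assms by (auto intro: card_extensions dust_address_in_addresses)
    finally show ?thesis .
  qed
  ultimately show ?thesis
    using card_le_card_image_mult[of "dust_address m ` S" ?trunc] image by simp
qed

lemma dust_point_prefix_eq:
  assumes "dist (dust_point \<alpha>) (dust_point \<alpha>') < 1 / 3 ^ k"
  shows "\<alpha> i \<inter> {..<k} = \<alpha>' i \<inter> {..<k}"
proof (rule ccontr)
  assume "\<alpha> i \<inter> {..<k} \<noteq> \<alpha>' i \<inter> {..<k}"
  then have "1 / 3 ^ k \<le> \<bar>(dust_point \<alpha> - dust_point \<alpha>') $ i\<bar>"
    using cantor_point_separation by (simp add: dust_point_def)
  also have "\<dots> \<le> dist (dust_point \<alpha>) (dust_point \<alpha>')"
    unfolding dist_norm by (rule component_le_norm_cart)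
  finally show False
    using assms by simp
qed

lemma card_dust_points_in_small_set:
  fixes W :: "(real ^ 'n::finite) set"
  assumes "bounded W" "diameter W < 1 / 3 ^ k" "k \<le> N"
  shows "card {\<alpha> \<in> addresses N. dust_point \<alpha> \<in> W} \<le> 2 ^ ((N - k) * CARD('n))"
proof (cases "{\<alpha> \<in> addresses N. dust_point \<alpha> \<in> W} = {}")
  case False
  then obtain \<alpha>\<^sub>0 where \<alpha>\<^sub>0: "\<alpha>\<^sub>0 \<in> addresses N" "dust_point \<alpha>\<^sub>0 \<in> W"
    by blast
  have "{\<alpha> \<in> addresses N. dust_point \<alpha> \<in> W} \<subseteq> extensions N k (\<lambda>i. \<alpha>\<^sub>0 i \<inter> {..<k})"
  proof (clarsimp simp: extensions_def)
    fix \<alpha> i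
    assume "\<alpha> \<in> addresses N" "dust_point \<alpha> \<in> W"
    then have "dist (dust_point \<alpha>) (dust_point \<alpha>\<^sub>0) < 1 / 3 ^ k"
      using diameter_bounded_bound[OF assms(1)] \<alpha>\<^sub>0(2) assms(2) by (meson le_less_trans)
    then show "\<alpha> i \<inter> {..<k} = \<alpha>\<^sub>0 i \<inter> {..<k}"
      by (rule dust_point_prefix_eq)
  qed
  then have "card {\<alpha> \<in> addresses N. dust_point \<alpha> \<in> W} \<le> card (extensions N k (\<lambda>i. \<alpha>\<^sub>0 i \<inter> {..<k}))"
    by (rule card_mono[OF finite_extensions])
  also have "\<dots> = 2 ^ ((N - k) * CARD('n))"
    using assms(3) by (intro card_extensions) (auto simp: addresses_def)
  finally show ?thesis .
qed (metis card.empty le0)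

lemma card_extensions_le_sum_cover:
  fixes W :: "'j \<Rightarrow> (real ^ 'n::finite) set"
  assumes "finite F" "cantor_dust \<inter> address_cube n \<beta> \<subseteq> (\<Union>j\<in>F. W j)"
  shows "card (extensions N n \<beta>) \<le> (\<Sum>j\<in>F. card {\<alpha> \<in> addresses N. dust_point \<alpha> \<in> W j})"
proof -
  let ?pts = "\<lambda>j. {\<alpha> \<in> addresses N. dust_point \<alpha> \<in> W j}"
  have "extensions N n \<beta> \<subseteq> (\<Union>j\<in>F. ?pts j)"
  proof
    fix \<alpha>
    assume "\<alpha> \<in> extensions N n \<beta>"
    then have \<alpha>: "\<alpha> \<in> addresses N" "\<And>i. \<alpha> i \<inter> {..<n} = \<beta> i"
      by (auto simp: extensions_def)
    then have "dust_point \<alpha> \<in> cantor_dust \<inter> address_cube n \<beta>"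
      using dust_point_in_cantor_dust dust_point_in_address_cube by blast
    then obtain j where "j \<in> F" "dust_point \<alpha> \<in> W j"
      using assms(2) by blast
    then show "\<alpha> \<in> (\<Union>j\<in>F. ?pts j)"
      using \<alpha>(1) by blast
  qed
  moreover have "finite (?pts j)" for j
    by (rule finite_subset[OF _ finite_addresses[of N]]) auto
  ultimately have "card (extensions N n \<beta>) \<le> card (\<Union>j\<in>F. ?pts j)"
    using assms(1) by (intro card_mono) auto
  also have "\<dots> \<le> (\<Sum>j\<in>F. card (?pts j))"
    by (rule card_UN_le[OF assms(1)])
  finally show ?thesis .
qed

section \<open>The Hausdorff dimension of the dust\<close>

definition cantor_dust_dim :: "nat \<Rightarrow> real" where
  "cantor_dust_dim d = d * ln 2 / ln 3"

lemma cantor_dust_dim_nonneg: "0 \<le> cantor_dust_dim d"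
  by (simp add: cantor_dust_dim_def)

lemma cantor_dust_dim_pos: "0 < d \<Longrightarrow> 0 < cantor_dust_dim d"
  by (simp add: cantor_dust_dim_def)

lemma pow3_powr_cantor_dust_dim: "((3::real) ^ n) powr cantor_dust_dim d = 2 ^ (n * d)"
proof -
  have "((3::real) ^ n) powr cantor_dust_dim d = exp (real (n * d) * ln 2)"
    by (simp add: powr_def ln_realpow cantor_dust_dim_def)
  also have "\<dots> = 2 powr real (n * d)"
    by (simp add: powr_def mult.commute)
  also have "\<dots> = 2 ^ (n * d)"
    by (rule powr_realpow) simp
  finally show ?thesis .
qed

lemma inverse_pow3_powr_cantor_dust_dim: "(1 / (3::real) ^ n) powr cantor_dust_dim d = 1 / 2 ^ (n * d)"
  by (simp add: powr_divide pow3_powr_cantor_dust_dim)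

lemma hausdorff_pre_cantor_dust_le:
  fixes A :: "(real ^ 'n::finite) set"
  assumes "CARD('n) / 3 ^ m \<le> \<delta>" "0 \<le> t"
  shows "hausdorff_pre t \<delta> (A \<inter> cantor_dust)
    \<le> ennreal (card (dust_address m ` (A \<inter> cantor_dust)) * (CARD('n) / 3 ^ m) powr t)"
proof -
  let ?B = "dust_address m ` (A \<inter> cantor_dust)"
  have "finite ?B"
    by (rule finite_subset[OF _ finite_addresses[of m]]) (auto simp: dust_address_in_addresses)
  moreover have "A \<inter> cantor_dust \<subseteq> (\<Union>\<beta>\<in>?B. address_cube m \<beta>)"
    using in_address_cube_dust_address by blast
  moreover have "bounded (address_cube m \<beta>) \<and> diameter (address_cube m \<beta>) \<le> \<delta>"
    for \<beta> :: "'n \<Rightarrow> nat set"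
    using bounded_address_cube diameter_address_cube[of m \<beta>] assms(1) by simp
  moreover have "0 \<le> \<delta>"
    using assms(1) by (rule order_trans[rotated]) simp
  ultimately have "hausdorff_pre t \<delta> (A \<inter> cantor_dust) \<le> (\<Sum>\<beta>\<in>?B. ennreal (diameter (address_cube m \<beta>) powr t))"
    by (intro hausdorff_pre_le_finite_cover)
  also have "\<dots> \<le> (\<Sum>\<beta>\<in>?B. ennreal ((CARD('n) / 3 ^ m) powr t))"
  proof (intro sum_mono ennreal_leI)
    fix \<beta> :: "'n \<Rightarrow> nat set"
    show "diameter (address_cube m \<beta>) powr t \<le> (CARD('n) / 3 ^ m) powr t"
      using diameter_address_cube[of m \<beta>] diameter_ge_0[OF bounded_address_cube] assms(2)
      by (intro powr_mono2)
  qed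
  also have "\<dots> = ennreal (card ?B * (CARD('n) / 3 ^ m) powr t)"
    by (simp add: ennreal_mult' ennreal_of_nat_eq_real_of_nat)
  finally show ?thesis .
qed

lemma hausdorff_measure_cantor_dust_le:
  fixes A :: "(real ^ 'n::finite) set"
  defines "s \<equiv> cantor_dust_dim CARD('n)"
  shows "hausdorff_measure s (A \<inter> cantor_dust)
    \<le> ennreal (card (dust_address n ` (A \<inter> cantor_dust)) * CARD('n) powr s / 2 ^ (n * CARD('n)))"
  unfolding hausdorff_measure_def
proof (rule SUP_least)
  let ?S = "A \<inter> cantor_dust" and ?d = "CARD('n)"
  fix \<delta> :: real
  assume "\<delta> \<in> {0<..}"
  then have "eventually (\<lambda>m. n \<le> m \<and> ?d / 3 ^ m \<le> \<delta>) sequentially"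
    by (intro eventually_conj eventually_ge_at_top eventually_div_pow3_le) simp
  then obtain m where m: "n \<le> m" "?d / 3 ^ m \<le> \<delta>"
    unfolding eventually_sequentially by blast
  have "hausdorff_pre s \<delta> ?S \<le> ennreal (card (dust_address m ` ?S) * (?d / 3 ^ m) powr s)"
    by (rule hausdorff_pre_cantor_dust_le[OF m(2)]) (simp add: s_def cantor_dust_dim_nonneg)
  also have "\<dots> \<le> ennreal (card (dust_address n ` ?S) * ?d powr s / 2 ^ (n * ?d))"
  proof (rule ennreal_leI)
    have card: "real (card (dust_address m ` ?S)) \<le> card (dust_address n ` ?S) * 2 ^ ((m - n) * ?d)"
      using of_nat_mono[OF card_dust_address_refine[OF m(1), of ?S]] by simp
    have "(?d / 3 ^ m) powr s = ?d powr s / 2 ^ (m * ?d)"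
      by (simp add: s_def powr_divide pow3_powr_cantor_dust_dim)
    then have "card (dust_address m ` ?S) * (?d / 3 ^ m) powr s
        \<le> card (dust_address n ` ?S) * 2 ^ ((m - n) * ?d) * (?d powr s / 2 ^ (m * ?d))"
      by (metis card mult_right_mono powr_ge_zero)
    also have "(2::real) ^ (m * ?d) = 2 ^ ((m - n) * ?d) * 2 ^ (n * ?d)"
      using m(1) by (simp flip: power_add add_mult_distrib)
    finally show "card (dust_address m ` ?S) * (?d / 3 ^ m) powr s
        \<le> card (dust_address n ` ?S) * ?d powr s / 2 ^ (n * ?d)"
      by simp
  qed
  finally show "hausdorff_pre s \<delta> ?S \<le> ennreal (card (dust_address n ` ?S) * ?d powr s / 2 ^ (n * ?d))" .
qed

lemma hausdorff_pre_cantor_dust_le_geometric: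
  assumes "CARD('n) / 3 ^ m \<le> \<delta>" "0 \<le> t"
  shows "hausdorff_pre t \<delta> (cantor_dust :: (real ^ 'n::finite) set)
    \<le> ennreal (CARD('n) powr t * (2 ^ CARD('n) / 3 powr t) ^ m)"
proof -
  let ?K = "cantor_dust :: (real ^ 'n) set" and ?d = "CARD('n)"
  have "hausdorff_pre t \<delta> (UNIV \<inter> ?K) \<le> ennreal (card (dust_address m ` (UNIV \<inter> ?K)) * (?d / 3 ^ m) powr t)"
    using assms by (rule hausdorff_pre_cantor_dust_le)
  also have "\<dots> \<le> ennreal (?d powr t * (2 ^ ?d / 3 powr t) ^ m)"
  proof (rule ennreal_leI)
    have "card (dust_address m ` (UNIV \<inter> ?K)) \<le> card (addresses m :: ('n \<Rightarrow> nat set) set)"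
      by (intro card_mono finite_addresses) (auto simp: dust_address_in_addresses)
    then have "real (card (dust_address m ` (UNIV \<inter> ?K))) \<le> 2 ^ (m * ?d)"
      using of_nat_mono by (fastforce simp: card_addresses)
    moreover have "2 ^ (m * ?d) * (?d / 3 ^ m) powr t = ?d powr t * (2 ^ ?d / 3 powr t) ^ m"
      by (simp add: powr_divide power_powr_swap power_divide power_mult mult.commute[of m])
    ultimately show "card (dust_address m ` (UNIV \<inter> ?K)) * (?d / 3 ^ m) powr t \<le> ?d powr t * (2 ^ ?d / 3 powr t) ^ m"
      by (metis mult_right_mono powr_ge_zero)
  qed
  finally show ?thesis
    by simp
qed

lemma hausdorff_measure_cantor_dust_eq_0:
  assumes "cantor_dust_dim CARD('n) < t"
  shows "hausdorff_measure t (cantor_dust :: (real ^ 'n::finite) set) = 0"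
proof -
  let ?K = "cantor_dust :: (real ^ 'n) set" and ?d = "CARD('n)"
  let ?q = "2 ^ ?d / 3 powr t"
  have "(3::real) powr cantor_dust_dim ?d < 3 powr t"
    by (rule powr_less_mono[OF assms]) simp
  moreover have "(3::real) powr cantor_dust_dim ?d = 2 ^ ?d"
    using pow3_powr_cantor_dust_dim[of 1 ?d] by simp
  ultimately have "?q < 1"
    by simp
  have "0 \<le> t"
    using assms cantor_dust_dim_nonneg[of ?d] by linarith
  have "hausdorff_pre t \<delta> ?K \<le> 0" if "0 < \<delta>" for \<delta>
  proof (rule tendsto_lowerbound[where F = sequentially])
    show "(\<lambda>m. ennreal (?d powr t * ?q ^ m)) \<longlonglongrightarrow> 0"
      using \<open>?q < 1\<close> tendsto_ennrealI[OF tendsto_mult[OF tendsto_const LIMSEQ_power_zero]] by fastforce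
    show "eventually (\<lambda>m. hausdorff_pre t \<delta> ?K \<le> ennreal (?d powr t * ?q ^ m)) sequentially"
      using eventually_div_pow3_le[OF that] by (rule eventually_mono)
        (rule hausdorff_pre_cantor_dust_le_geometric[OF _ \<open>0 \<le> t\<close>])
  qed simp
  then show ?thesis
    unfolding hausdorff_measure_def by simp
qed

text \<open>A mass distribution estimate: the uniform distribution on the level-N dust points gives every
  set W of diameter at least 3^-N mass at most 2^d (diameter W)^s.\<close>
lemma card_dust_points_in_le:
  fixes W :: "(real ^ 'n::finite) set"
  defines "s \<equiv> cantor_dust_dim CARD('n)"
  assumes W: "bounded W" "1 / 3 ^ N \<le> diameter W"
  shows "card {\<alpha> \<in> addresses N. dust_point \<alpha> \<in> W} \<le> 2 ^ CARD('n) * diameter W powr s * 2 ^ (N * CARD('n))"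
proof (cases "diameter W < 1")
  case False
  have "card {\<alpha> \<in> addresses N. dust_point \<alpha> \<in> W} \<le> card (addresses N :: ('n \<Rightarrow> nat set) set)"
    by (intro card_mono finite_addresses) auto
  then have "real (card {\<alpha> \<in> addresses N. dust_point \<alpha> \<in> W}) \<le> 1 * 1 * 2 ^ (N * CARD('n))"
    using of_nat_mono by (fastforce simp: card_addresses)
  also have "\<dots> \<le> 2 ^ CARD('n) * diameter W powr s * 2 ^ (N * CARD('n))"
    using False by (intro mult_right_mono mult_mono ge_one_powr_ge_zero) (auto simp: s_def cantor_dust_dim_nonneg)
  finally show ?thesis .
next
  case True
  obtain k where k: "1 / 3 ^ Suc k \<le> diameter W" "diameter W < 1 / 3 ^ k"
    using exists_pow3_bracket[OF _ True] W(2) by (smt (verit) zero_less_divide_1_iff zero_less_power)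
  have "k \<le> N"
  proof (rule ccontr)
    assume "\<not> k \<le> N"
    then have "1 / (3::real) ^ k \<le> 1 / 3 ^ N"
      by (intro divide_left_mono power_increasing) auto
    then show False
      using k(2) W(2) by linarith
  qed
  have "real (card {\<alpha> \<in> addresses N. dust_point \<alpha> \<in> W}) \<le> 2 ^ ((N - k) * CARD('n))"
    using card_dust_points_in_small_set[OF W(1) k(2) \<open>k \<le> N\<close>] by simp
  also have "\<dots> = 2 ^ CARD('n) * (1 / 2 ^ (Suc k * CARD('n))) * 2 ^ (N * CARD('n))"
  proof -
    have "(2::real) ^ (N * CARD('n)) = 2 ^ ((N - k) * CARD('n)) * 2 ^ (k * CARD('n))"
      using \<open>k \<le> N\<close> by (simp flip: power_add add_mult_distrib)
    then show ?thesis
      by (simp add: power_add)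
  qed
  also have "\<dots> = 2 ^ CARD('n) * (1 / 3 ^ Suc k) powr s * 2 ^ (N * CARD('n))"
    by (simp only: s_def inverse_pow3_powr_cantor_dust_dim)
  also have "\<dots> \<le> 2 ^ CARD('n) * diameter W powr s * 2 ^ (N * CARD('n))"
    using k(1) by (intro mult_right_mono mult_left_mono powr_mono2) (auto simp: s_def cantor_dust_dim_nonneg)
  finally show ?thesis .
qed

lemma cantor_cube_finite_cover_bound:
  fixes W :: "'j \<Rightarrow> (real ^ 'n::finite) set"
  defines "s \<equiv> cantor_dust_dim CARD('n)"
  assumes "finite F" "\<beta> \<in> addresses n"
    and cover: "cantor_dust \<inter> address_cube n \<beta> \<subseteq> (\<Union>j\<in>F. W j)"
    and W: "\<And>j. j \<in> F \<Longrightarrow> bounded (W j) \<and> 0 < diameter (W j)"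
  shows "1 / 2 ^ (n * CARD('n)) \<le> 2 ^ CARD('n) * (\<Sum>j\<in>F. diameter (W j) powr s)"
proof -
  let ?d = "CARD('n)"
  have "eventually (\<lambda>N. n \<le> N \<and> (\<forall>j\<in>F. 1 / 3 ^ N \<le> diameter (W j))) sequentially"
    using W by (intro eventually_conj eventually_ge_at_top eventually_ball_finite \<open>finite F\<close> ballI
        eventually_div_pow3_le) auto
  then obtain N where N: "n \<le> N" "\<And>j. j \<in> F \<Longrightarrow> 1 / 3 ^ N \<le> diameter (W j)"
    unfolding eventually_sequentially by blast
  let ?pts = "\<lambda>j. {\<alpha> \<in> addresses N. dust_point \<alpha> \<in> W j}"
  have "real (card (extensions N n \<beta>)) \<le> real (\<Sum>j\<in>F. card (?pts j))"
    using of_nat_mono[OF card_extensions_le_sum_cover[OF \<open>finite F\<close> cover]] .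
  then have "2 ^ ((N - n) * ?d) \<le> (\<Sum>j\<in>F. real (card (?pts j)))"
    by (simp add: card_extensions[OF N(1) \<open>\<beta> \<in> addresses n\<close>])
  also have "\<dots> \<le> (\<Sum>j\<in>F. 2 ^ ?d * diameter (W j) powr s * 2 ^ (N * ?d))"
    using W N(2) by (intro sum_mono) (simp add: s_def card_dust_points_in_le)
  also have "\<dots> = 2 ^ (N * ?d) * (2 ^ ?d * (\<Sum>j\<in>F. diameter (W j) powr s))"
    by (simp add: sum_distrib_left sum_distrib_right mult_ac)
  also have "(2::real) ^ (N * ?d) = 2 ^ ((N - n) * ?d) * 2 ^ (n * ?d)"
    using N(1) by (simp flip: power_add add_mult_distrib)
  finally show ?thesis
    by (simp add: field_simps)
qed

text \<open>Enlarging the sets of a countable cover to open balls, at an arbitrarily small cost, and passing to a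
  finite subcover reduces countable covers to the finite case.\<close>
lemma cantor_cube_countable_cover_bound:
  fixes U :: "nat \<Rightarrow> (real ^ 'n::finite) set"
  defines "s \<equiv> cantor_dust_dim CARD('n)"
  assumes "\<beta> \<in> addresses n"
    and cover: "cantor_dust \<inter> address_cube n \<beta> \<subseteq> (\<Union>j. U j)"
    and bounded: "\<And>j. bounded (U j)"
    and summable: "summable (\<lambda>j. diameter (U j) powr s)"
  shows "1 / (2 ^ (n * CARD('n)) * 2 ^ CARD('n)) \<le> 4 powr s * (\<Sum>j. diameter (U j) powr s)"
proof (rule field_le_epsilon)
  let ?d = "CARD('n)" and ?X = "\<Sum>j. diameter (U j) powr s"
  fix \<eta> :: real
  assume "0 < \<eta>"
  have "0 < s"
    by (simp add: s_def cantor_dust_dim_pos)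
  obtain c r where balls: "\<And>j. U j \<subseteq> ball (c j) (r j)" "\<And>j. 0 < r j"
    "\<And>j. (2 * r j) powr s \<le> 4 powr s * diameter (U j) powr s + \<eta> / 2 ^ Suc j"
    using exists_ball_cover_powr[where U = U, OF bounded \<open>0 < s\<close> \<open>0 < \<eta>\<close>] by blast
  have compact: "compact (cantor_dust \<inter> address_cube n \<beta>)"
    by (intro compact_Int_closed compact_cantor_dust closed_address_cube)
  have ball_cover: "cantor_dust \<inter> address_cube n \<beta> \<subseteq> (\<Union>j\<in>UNIV. ball (c j) (r j))"
    using cover balls(1) by blast
  have "\<And>j. j \<in> UNIV \<Longrightarrow> open (ball (c j) (r j))"
    by simp
  then obtain F where "F \<subseteq> UNIV" "finite F"
    and F: "cantor_dust \<inter> address_cube n \<beta> \<subseteq> (\<Union>j\<in>F. ball (c j) (r j))"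
    by (rule compactE_image[OF compact _ ball_cover])
  moreover have "bounded (ball (c j) (r j)) \<and> 0 < diameter (ball (c j) (r j))" for j
    using balls(2)[of j] by simp
  ultimately have covered: "1 / 2 ^ (n * ?d) \<le> 2 ^ ?d * (\<Sum>j\<in>F. diameter (ball (c j) (r j)) powr s)"
    unfolding s_def using \<open>finite F\<close> \<open>\<beta> \<in> addresses n\<close> by (intro cantor_cube_finite_cover_bound)
  have "(\<Sum>j\<in>F. diameter (ball (c j) (r j)) powr s) \<le> (\<Sum>j\<in>F. 4 powr s * diameter (U j) powr s + \<eta> / 2 ^ Suc j)"
  proof (rule sum_mono)
    fix j
    show "diameter (ball (c j) (r j)) powr s \<le> 4 powr s * diameter (U j) powr s + \<eta> / 2 ^ Suc j"
      using balls(2,3)[of j] by simp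
  qed
  also have "\<dots> = 4 powr s * (\<Sum>j\<in>F. diameter (U j) powr s) + (\<Sum>j\<in>F. \<eta> / 2 ^ Suc j)"
    by (simp add: sum.distrib sum_distrib_left)
  also have "\<dots> \<le> 4 powr s * ?X + \<eta>"
    using sum_le_suminf[OF summable \<open>finite F\<close>] sum_div_pow2_Suc_le[OF \<open>finite F\<close>, of \<eta>] \<open>0 < \<eta>\<close>
    by (intro add_mono mult_left_mono) auto
  finally have "1 / 2 ^ (n * ?d) \<le> 2 ^ ?d * (4 powr s * ?X + \<eta>)"
    by (rule order_trans[OF covered mult_left_mono]) simp
  then show "1 / (2 ^ (n * ?d) * 2 ^ ?d) \<le> 4 powr s * ?X + \<eta>"
    by (simp add: divide_le_eq mult_ac)
qed

lemma hausdorff_pre_cantor_cube_ge: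
  fixes \<beta> :: "'n::finite \<Rightarrow> nat set"
  defines "s \<equiv> cantor_dust_dim CARD('n)"
  assumes "\<beta> \<in> addresses n"
  shows "ennreal (1 / (2 ^ (n * CARD('n)) * 2 ^ CARD('n) * 4 powr s))
    \<le> hausdorff_pre s \<delta> (cantor_dust \<inter> address_cube n \<beta>)"
  unfolding hausdorff_pre_def
proof (rule INF_greatest)
  fix U :: "nat \<Rightarrow> (real ^ 'n) set"
  assume "U \<in> {U. cantor_dust \<inter> address_cube n \<beta> \<subseteq> (\<Union>i. U i) \<and> (\<forall>i. bounded (U i) \<and> diameter (U i) \<le> \<delta>)}"
  then have cover: "cantor_dust \<inter> address_cube n \<beta> \<subseteq> (\<Union>j. U j)" and bounded: "\<And>j. bounded (U j)"
    by auto
  show "ennreal (1 / (2 ^ (n * CARD('n)) * 2 ^ CARD('n) * 4 powr s)) \<le> (\<Sum>j. ennreal (diameter (U j) powr s))"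
  proof (cases "summable (\<lambda>j. diameter (U j) powr s)")
    case True
    then have "1 / (2 ^ (n * CARD('n)) * 2 ^ CARD('n)) \<le> 4 powr s * (\<Sum>j. diameter (U j) powr s)"
      unfolding s_def by (rule cantor_cube_countable_cover_bound[where U = U, OF assms(2) cover bounded])
    then have "1 / (2 ^ (n * CARD('n)) * 2 ^ CARD('n)) / 4 powr s \<le> (\<Sum>j. diameter (U j) powr s)"
      by (simp add: pos_divide_le_eq mult_ac)
    then have "ennreal (1 / (2 ^ (n * CARD('n)) * 2 ^ CARD('n) * 4 powr s))
        \<le> ennreal (\<Sum>j. diameter (U j) powr s)"
      by (intro ennreal_leI) (simp add: mult.assoc)
    also have "\<dots> = (\<Sum>j. ennreal (diameter (U j) powr s))"
      by (rule suminf_ennreal2[OF _ True, symmetric]) simp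
    finally show ?thesis .
  next
    case False
    then have "(\<Sum>j. ennreal (diameter (U j) powr s)) = top"
      using summable_suminf_not_top[of "\<lambda>j. diameter (U j) powr s"] powr_ge_zero by blast
    then show ?thesis
      by (simp only: top_greatest)
  qed
qed

lemma hausdorff_measure_cantor_cube_ge:
  fixes \<beta> :: "'n::finite \<Rightarrow> nat set"
  defines "s \<equiv> cantor_dust_dim CARD('n)"
  assumes "\<beta> \<in> addresses n"
  shows "ennreal (1 / (2 ^ (n * CARD('n)) * 2 ^ CARD('n) * 4 powr s))
    \<le> hausdorff_measure s (cantor_dust \<inter> address_cube n \<beta>)"
  unfolding hausdorff_measure_def s_def
  by (rule SUP_upper2[of 1]) (use hausdorff_pre_cantor_cube_ge[OF assms(2)] in auto)

lemma hausdorff_measure_cantor_dust_ne_0: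
  assumes "t \<le> cantor_dust_dim CARD('n)"
  shows "hausdorff_measure t (cantor_dust :: (real ^ 'n::finite) set) \<noteq> 0"
proof -
  let ?K = "cantor_dust :: (real ^ 'n) set" and ?s = "cantor_dust_dim CARD('n)"
  have "(\<lambda>_. {}) \<in> (addresses 0 :: ('n \<Rightarrow> nat set) set)"
    by (simp add: addresses_def)
  from hausdorff_pre_cantor_cube_ge[OF this, where \<delta> = 1]
  have "ennreal (1 / (2 ^ CARD('n) * 4 powr ?s)) \<le> hausdorff_pre ?s 1 (?K \<inter> address_cube 0 (\<lambda>_. {}))"
    by simp
  also have "\<dots> \<le> hausdorff_pre ?s 1 ?K"
    by (rule hausdorff_pre_mono) simp
  also have "\<dots> \<le> hausdorff_pre t 1 ?K"
    using assms by (rule hausdorff_pre_exponent_antimono) simp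
  also have "\<dots> \<le> hausdorff_measure t ?K"
    unfolding hausdorff_measure_def by (rule SUP_upper) simp
  finally have "ennreal (1 / (2 ^ CARD('n) * 4 powr ?s)) \<le> hausdorff_measure t ?K" .
  moreover have "0 < ennreal (1 / (2 ^ CARD('n) * 4 powr ?s))"
    by simp
  ultimately show ?thesis
    by (metis not_le order_trans)
qed

lemma hausdorff_dim_cantor_dust:
  "hausdorff_dim (cantor_dust :: (real ^ 'n::finite) set) = cantor_dust_dim CARD('n)"
proof -
  have "0 \<le> t \<and> hausdorff_measure t (cantor_dust :: (real ^ 'n) set) = 0 \<longleftrightarrow> cantor_dust_dim CARD('n) < t"
    for t
    using hausdorff_measure_cantor_dust_eq_0[where 'n = 'n, of t] hausdorff_measure_cantor_dust_ne_0[where 'n = 'n, of t]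
      cantor_dust_dim_nonneg[of "CARD('n)"] by fastforce
  then have "{t. 0 \<le> t \<and> hausdorff_measure t (cantor_dust :: (real ^ 'n) set) = 0} = {cantor_dust_dim CARD('n)<..}"
    by auto
  then show ?thesis
    by (simp add: hausdorff_dim_def)
qed

section \<open>Tubes around affine subspaces\<close>

lemma exists_normalised_vector:
  fixes V :: "(real ^ 'n::finite) set"
  assumes "subspace V" "w \<in> V" "w \<noteq> 0"
  obtains u i\<^sub>0 where "u \<in> V" "u $ i\<^sub>0 = 1" "\<And>i. \<bar>u $ i\<bar> \<le> 1"
proof -
  have "Max (range (\<lambda>i. \<bar>w $ i\<bar>)) \<in> range (\<lambda>i. \<bar>w $ i\<bar>)"
    by (rule Max_in) auto
  then obtain i\<^sub>0 where i\<^sub>0: "\<bar>w $ i\<^sub>0\<bar> = Max (range (\<lambda>i. \<bar>w $ i\<bar>))"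
    by (metis rangeE)
  then have le: "\<bar>w $ i\<bar> \<le> \<bar>w $ i\<^sub>0\<bar>" for i
    by simp
  have "w $ i\<^sub>0 \<noteq> 0"
  proof
    assume "w $ i\<^sub>0 = 0"
    then have "w $ i = 0" for i
      using le[of i] by simp
    then show False
      using assms(3) by (simp add: vec_eq_iff)
  qed
  show ?thesis
  proof
    show "(1 / w $ i\<^sub>0) *\<^sub>R w \<in> V"
      using assms(1,2) by (rule subspace_scale)
    show "((1 / w $ i\<^sub>0) *\<^sub>R w) $ i\<^sub>0 = 1"
      using \<open>w $ i\<^sub>0 \<noteq> 0\<close> by simp
    show "\<bar>((1 / w $ i\<^sub>0) *\<^sub>R w) $ i\<bar> \<le> 1" for i
      using le[of i] \<open>w $ i\<^sub>0 \<noteq> 0\<close> by (simp add: abs_mult divide_le_eq_1)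
  qed
qed

lemma dominating_coordinates_step:
  fixes u v :: "real ^ 'n::finite" and C :: real
  assumes u: "u $ i\<^sub>0 = 1" "\<And>i. \<bar>u $ i\<bar> \<le> 1"
    and dom: "\<And>i. \<bar>(v - v $ i\<^sub>0 *\<^sub>R u) $ i\<bar> \<le> C * (\<Sum>j\<in>J. \<bar>(v - v $ i\<^sub>0 *\<^sub>R u) $ j\<bar>)"
    and "1 \<le> C"
  shows "\<bar>v $ i\<bar> \<le> (real CARD('n) + 2) * C * (\<Sum>j\<in>insert i\<^sub>0 J. \<bar>v $ j\<bar>)"
proof -
  let ?d = "real CARD('n)" and ?S = "\<Sum>j\<in>insert i\<^sub>0 J. \<bar>v $ j\<bar>" and ?v' = "v - v $ i\<^sub>0 *\<^sub>R u"
  have near: "\<bar>v $ j\<bar> \<le> \<bar>?v' $ j\<bar> + \<bar>v $ i\<^sub>0\<bar>" "\<bar>?v' $ j\<bar> \<le> \<bar>v $ j\<bar> + \<bar>v $ i\<^sub>0\<bar>" for j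
  proof -
    let ?p = "v $ i\<^sub>0 * u $ j"
    have "\<bar>?p\<bar> \<le> \<bar>v $ i\<^sub>0\<bar>"
      using u(2)[of j] by (simp add: abs_mult mult_left_le)
    then show "\<bar>v $ j\<bar> \<le> \<bar>?v' $ j\<bar> + \<bar>v $ i\<^sub>0\<bar>" "\<bar>?v' $ j\<bar> \<le> \<bar>v $ j\<bar> + \<bar>v $ i\<^sub>0\<bar>"
      using abs_triangle_ineq[of "v $ j - ?p" ?p] abs_triangle_ineq4[of "v $ j" ?p] by simp_all
  qed
  have i0: "\<bar>v $ i\<^sub>0\<bar> \<le> ?S"
    by (rule member_le_sum) auto
  have J: "(\<Sum>j\<in>J. \<bar>v $ j\<bar>) \<le> ?S"
    by (rule sum_mono2) auto
  have "card J \<le> CARD('n)"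
    by (rule card_mono) auto
  have "(\<Sum>j\<in>J. \<bar>?v' $ j\<bar>) \<le> (\<Sum>j\<in>J. \<bar>v $ j\<bar> + \<bar>v $ i\<^sub>0\<bar>)"
    by (rule sum_mono) (rule near(2))
  also have "\<dots> = (\<Sum>j\<in>J. \<bar>v $ j\<bar>) + card J * \<bar>v $ i\<^sub>0\<bar>"
    by (simp add: sum.distrib)
  also have "\<dots> \<le> ?S + ?d * ?S"
    using J i0 \<open>card J \<le> CARD('n)\<close> by (intro add_mono mult_mono) auto
  finally have "(\<Sum>j\<in>J. \<bar>?v' $ j\<bar>) \<le> (?d + 1) * ?S"
    by (simp add: algebra_simps)
  then have "\<bar>?v' $ i\<bar> \<le> C * ((?d + 1) * ?S)"
    using dom[of i] \<open>1 \<le> C\<close> by (meson mult_left_mono order_trans zero_le_one)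
  moreover have "?S \<le> C * ?S"
    using mult_right_mono[OF \<open>1 \<le> C\<close>, of ?S] by (simp add: sum_nonneg)
  ultimately have "\<bar>v $ i\<bar> \<le> C * ((?d + 1) * ?S) + C * ?S"
    using near(1)[of i] i0 by linarith
  then show ?thesis
    by (simp add: algebra_simps)
qed

lemma subspace_coordinate_section:
  fixes V :: "(real ^ 'n::finite) set"
  assumes "subspace V" "u \<in> V" "u $ i\<^sub>0 \<noteq> 0"
  shows "subspace {v \<in> V. v $ i\<^sub>0 = 0}" "dim {v \<in> V. v $ i\<^sub>0 = 0} < dim V"
proof -
  show sub: "subspace {v \<in> V. v $ i\<^sub>0 = 0}"
    using assms(1) by (auto simp: subspace_def)
  have "{v \<in> V. v $ i\<^sub>0 = 0} \<subset> V"
    using assms(2,3) by blast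
  then show "dim {v \<in> V. v $ i\<^sub>0 = 0} < dim V"
    using dim_psubset[of "{v \<in> V. v $ i\<^sub>0 = 0}" V] sub assms(1) by (simp add: span_eq_iff[THEN iffD2])
qed

lemma exists_dominating_coordinates:
  fixes V :: "(real ^ 'n::finite) set"
  assumes "subspace V" "dim V \<le> k"
  shows "\<exists>J. card J \<le> dim V \<and> (\<forall>v\<in>V. \<forall>i. \<bar>v $ i\<bar> \<le> (real CARD('n) + 2) ^ k * (\<Sum>j\<in>J. \<bar>v $ j\<bar>))"
  using assms
proof (induction k arbitrary: V)
  case 0
  then have "V \<subseteq> {0}"
    by simp
  then show ?case
    by (intro exI[of _ "{}"]) auto
next
  case (Suc k)
  show ?case
  proof (cases "V \<subseteq> {0}")
    case True
    then show ?thesis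
      by (intro exI[of _ "{}"]) auto
  next
    case False
    then obtain w where "w \<in> V" "w \<noteq> 0"
      by auto
    then obtain u i\<^sub>0 where u: "u \<in> V" "u $ i\<^sub>0 = 1" "\<And>i. \<bar>u $ i\<bar> \<le> 1"
      using exists_normalised_vector[OF Suc.prems(1)] by blast
    let ?V' = "{v \<in> V. v $ i\<^sub>0 = 0}"
    have V': "subspace ?V'" "dim ?V' < dim V"
      using subspace_coordinate_section[OF Suc.prems(1) u(1)] u(2) by simp_all
    then obtain J' where J': "card J' \<le> dim ?V'"
      and dom: "\<And>v i. v \<in> ?V' \<Longrightarrow> \<bar>v $ i\<bar> \<le> (real CARD('n) + 2) ^ k * (\<Sum>j\<in>J'. \<bar>v $ j\<bar>)"
      using Suc.IH[OF V'(1)] Suc.prems(2) by fastforce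
    have "card (insert i\<^sub>0 J') \<le> dim V"
      using J' V'(2) card_insert_le_m1[of _ J'] by (simp add: card_insert_if)
    moreover have "\<bar>v $ i\<bar> \<le> (real CARD('n) + 2) ^ Suc k * (\<Sum>j\<in>insert i\<^sub>0 J'. \<bar>v $ j\<bar>)"
      if "v \<in> V" for v i
    proof -
      have "v - v $ i\<^sub>0 *\<^sub>R u \<in> ?V'"
        using that u Suc.prems(1) by (auto intro: subspace_diff subspace_scale)
      moreover have "1 \<le> (real CARD('n) + 2) ^ k"
        by simp
      ultimately have "\<bar>v $ i\<bar> \<le> (real CARD('n) + 2) * (real CARD('n) + 2) ^ k * (\<Sum>j\<in>insert i\<^sub>0 J'. \<bar>v $ j\<bar>)"
        using dom by (intro dominating_coordinates_step[OF u(2,3)])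
      then show ?thesis
        by simp
    qed
    ultimately show ?thesis
      by blast
  qed
qed

lemma card_cantor_points_near:
  "card {B. B \<subseteq> {..<n} \<and> \<bar>cantor_point B - x\<bar> \<le> R / 3 ^ n} \<le> 2 * R + 1"
proof -
  let ?W = "{B. B \<subseteq> {..<n} \<and> \<bar>cantor_point B - x\<bar> \<le> R / 3 ^ n}"
  have sep: "1 / 3 ^ n \<le> \<bar>cantor_point B - cantor_point B'\<bar>" if "B \<in> ?W" "B' \<in> ?W" "B \<noteq> B'" for B B'
    using that by (intro cantor_point_separation) auto
  have "inj_on cantor_point ?W"
  proof (rule inj_onI, rule ccontr)
    fix B B'
    assume "B \<in> ?W" "B' \<in> ?W" "cantor_point B = cantor_point B'" "B \<noteq> B'"
    then have "1 / 3 ^ n \<le> (0::real)"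
      using sep[of B B'] by simp
    moreover have "(0::real) < 1 / 3 ^ n"
      by simp
    ultimately show False
      by linarith
  qed
  moreover have "card (cantor_point ` ?W) \<le> 2 * R + 1"
  proof (rule card_separated_le[where h = "1 / 3 ^ n" and a = "x - R / 3 ^ n"])
    show "cantor_point ` ?W \<subseteq> {x - R / 3 ^ n..x - R / 3 ^ n + real (2 * R) * (1 / 3 ^ n)}"
      by (auto simp: abs_le_iff)
  qed (use sep in auto)
  ultimately show ?thesis
    by (simp add: card_image)
qed

lemma card_addresses_near:
  fixes x :: "'n::finite \<Rightarrow> real"
  shows "card {\<beta> \<in> addresses n. \<forall>i. \<bar>cantor_point (\<beta> i) - x i\<bar> \<le> R / 3 ^ n} \<le> (2 * R + 1) ^ CARD('n)"
proof -
  let ?W = "\<lambda>i. {B. B \<subseteq> {..<n} \<and> \<bar>cantor_point B - x i\<bar> \<le> R / 3 ^ n}"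
  have "{\<beta> \<in> addresses n. \<forall>i. \<bar>cantor_point (\<beta> i) - x i\<bar> \<le> R / 3 ^ n} \<subseteq> PiE UNIV ?W"
    by (auto simp: addresses_def)
  moreover have "finite (PiE UNIV ?W)"
    by (intro finite_PiE) (auto intro: finite_subset[of _ "Pow {..<n}"])
  ultimately have "card {\<beta> \<in> addresses n. \<forall>i. \<bar>cantor_point (\<beta> i) - x i\<bar> \<le> R / 3 ^ n}
      \<le> card (PiE UNIV ?W)"
    by (intro card_mono)
  also have "\<dots> = (\<Prod>i\<in>UNIV. card (?W i))"
    by (rule card_PiE) simp
  also have "\<dots> \<le> (\<Prod>i\<in>(UNIV :: 'n set). 2 * R + 1)"
    by (intro prod_mono conjI card_cantor_points_near) simp
  finally show ?thesis
    by simp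
qed

lemma dust_addresses_close_along_tube:
  fixes y y' q q' :: "real ^ 'n::finite"
  assumes dom: "\<And>i. \<bar>(y - y') $ i\<bar> \<le> G * (\<Sum>j\<in>J. \<bar>(y - y') $ j\<bar>)" and "0 \<le> G"
    and near: "dist y q < \<epsilon>" "dist y' q' < \<epsilon>" "\<epsilon> \<le> 1 / 3 ^ n"
    and dust: "q \<in> cantor_dust" "q' \<in> cantor_dust"
    and agree: "\<And>j. j \<in> J \<Longrightarrow> dust_address n q j = dust_address n q' j"
  shows "\<bar>cantor_point (dust_address n q i) - cantor_point (dust_address n q' i)\<bar> \<le> (3 * G * card J + 3) / 3 ^ n"
proof -
  let ?c = "\<lambda>q i. cantor_point (dust_address n q i)"
  have cube: "?c q i \<le> q $ i" "q $ i \<le> ?c q i + 1 / 3 ^ n" "?c q' i \<le> q' $ i" "q' $ i \<le> ?c q' i + 1 / 3 ^ n"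
    for i
    using in_address_cube_dust_address[OF dust(1), of n] in_address_cube_dust_address[OF dust(2), of n]
    by (simp_all add: address_cube_def)
  have coord: "\<bar>y $ i - q $ i\<bar> < \<epsilon>" "\<bar>y' $ i - q' $ i\<bar> < \<epsilon>" for i
    using near(1,2) component_le_norm_cart[of "y - q" i] component_le_norm_cart[of "y' - q'" i]
    by (simp_all add: dist_norm)
  have "\<bar>(y - y') $ j\<bar> \<le> 3 / 3 ^ n" if "j \<in> J" for j
    using cube[of j] coord[of j] agree[OF that] near(3) by (simp add: abs_le_iff abs_less_iff)
  then have "(\<Sum>j\<in>J. \<bar>(y - y') $ j\<bar>) \<le> card J * (3 / 3 ^ n)"
    by (rule sum_bounded_above)
  then have "\<bar>(y - y') $ i\<bar> \<le> G * (card J * (3 / 3 ^ n))"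
    using dom[of i] mult_left_mono[OF _ \<open>0 \<le> G\<close>] by (meson order_trans)
  then have "\<bar>?c q i - ?c q' i\<bar> \<le> G * (card J * (3 / 3 ^ n)) + 2 / 3 ^ n + 1 / 3 ^ n"
    using cube[of i] coord[of i] near(3) by (simp add: abs_le_iff abs_less_iff)
  also have "\<dots> = (3 * G * card J + 3) / 3 ^ n"
    by (simp add: field_simps)
  finally show ?thesis .
qed

lemma card_tube_fibre_le:
  fixes L :: "(real ^ 'n::finite) set" and R :: nat
  assumes dom: "\<And>y y' i. y \<in> L \<Longrightarrow> y' \<in> L \<Longrightarrow> \<bar>(y - y') $ i\<bar> \<le> G * (\<Sum>j\<in>J. \<bar>(y - y') $ j\<bar>)"
    and "0 \<le> G" "3 * G * card J + 3 \<le> R" "\<epsilon> \<le> 1 / 3 ^ n"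
  shows "card {\<beta> \<in> dust_address n ` (nbhd L \<epsilon> \<inter> cantor_dust). restrict \<beta> J = \<gamma>} \<le> (2 * R + 1) ^ CARD('n)"
proof (cases "\<exists>q'\<in>nbhd L \<epsilon> \<inter> cantor_dust. restrict (dust_address n q') J = \<gamma>")
  case True
  then obtain q' where q': "q' \<in> nbhd L \<epsilon>" "q' \<in> cantor_dust" "restrict (dust_address n q') J = \<gamma>"
    by blast
  obtain y' where y': "y' \<in> L" "dist y' q' < \<epsilon>"
    using q'(1) unfolding nbhd_def by (auto simp: dist_commute)
  let ?near = "{\<beta> \<in> addresses n. \<forall>i. \<bar>cantor_point (\<beta> i) - cantor_point (dust_address n q' i)\<bar> \<le> R / 3 ^ n}"
  have "{\<beta> \<in> dust_address n ` (nbhd L \<epsilon> \<inter> cantor_dust). restrict \<beta> J = \<gamma>} \<subseteq> ?near"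
  proof
    fix \<beta>
    assume "\<beta> \<in> {\<beta> \<in> dust_address n ` (nbhd L \<epsilon> \<inter> cantor_dust). restrict \<beta> J = \<gamma>}"
    then obtain q where q: "q \<in> nbhd L \<epsilon>" "q \<in> cantor_dust" "restrict (dust_address n q) J = \<gamma>"
      and \<beta>: "\<beta> = dust_address n q"
      by blast
    obtain y where y: "y \<in> L" "dist y q < \<epsilon>"
      using q(1) unfolding nbhd_def by (auto simp: dist_commute)
    have "dust_address n q j = dust_address n q' j" if "j \<in> J" for j
      using q(3) q'(3) that by (metis restrict_apply')
    then have "\<bar>cantor_point (dust_address n q i) - cantor_point (dust_address n q' i)\<bar>
        \<le> (3 * G * card J + 3) / 3 ^ n" for i
      using dom[OF y(1) y'(1)] assms(2,4) y(2) y'(2) q(2) q'(2) by (intro dust_addresses_close_along_tube)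
    also have "\<dots> \<le> R / 3 ^ n"
      using assms(3) by (simp add: divide_right_mono)
    finally show "\<beta> \<in> ?near"
      by (simp add: \<beta> dust_address_in_addresses)
  qed
  then have "card {\<beta> \<in> dust_address n ` (nbhd L \<epsilon> \<inter> cantor_dust). restrict \<beta> J = \<gamma>} \<le> card ?near"
    by (rule card_mono[rotated]) (rule finite_subset[OF _ finite_addresses[of n]], auto)
  also have "\<dots> \<le> (2 * R + 1) ^ CARD('n)"
    by (rule card_addresses_near)
  finally show ?thesis .
next
  case False
  then have "{\<beta> \<in> dust_address n ` (nbhd L \<epsilon> \<inter> cantor_dust). restrict \<beta> J = \<gamma>} = {}"
    by blast
  then show ?thesis
    by (metis card.empty le0)
qed

text \<open>The constant is independent of \<open>L\<close>: on the direction space of \<open>L\<close> at most \<open>m\<close> coordinates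
  control all others with a uniform factor, so the digits of these coordinates determine the address up
  to a bounded number of choices.\<close>
lemma card_tube_addresses_le:
  obtains C :: nat where "\<And>L m n \<epsilon>. affine L \<Longrightarrow> L \<noteq> {} \<Longrightarrow> aff_dim L = int m \<Longrightarrow> \<epsilon> \<le> 1 / 3 ^ n \<Longrightarrow>
    card (dust_address n ` (nbhd L \<epsilon> \<inter> (cantor_dust :: (real ^ 'n::finite) set))) \<le> C * 2 ^ (n * m)"
proof -
  let ?d = "CARD('n)"
  define R :: nat where "R = 3 * (?d + 2) ^ ?d * ?d + 3"
  have "card (dust_address n ` (nbhd L \<epsilon> \<inter> cantor_dust)) \<le> (2 * R + 1) ^ ?d * 2 ^ (n * m)"
    if L: "affine L" "L \<noteq> {}" "aff_dim L = int m" and \<epsilon>: "\<epsilon> \<le> 1 / 3 ^ n" for L :: "(real ^ 'n) set" and m n \<epsilon>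
  proof -
    let ?T = "dust_address n ` (nbhd L \<epsilon> \<inter> cantor_dust)"
    obtain a where "a \<in> L"
      using L(2) by blast
    define V where "V = (\<lambda>x. x - a) ` L"
    have "subspace V"
      unfolding V_def by (rule affine_diffs_subspace_subtract[OF L(1) \<open>a \<in> L\<close>])
    have "aff_dim L = int (dim V)"
      unfolding V_def by (rule aff_dim_eq_dim_subtract) (rule hull_inc[OF \<open>a \<in> L\<close>])
    then obtain J where J: "card J \<le> m"
      and dom: "\<And>v i. v \<in> V \<Longrightarrow> \<bar>v $ i\<bar> \<le> (real ?d + 2) ^ ?d * (\<Sum>j\<in>J. \<bar>v $ j\<bar>)"
      using exists_dominating_coordinates[OF \<open>subspace V\<close> dim_subset_UNIV_cart[of V]] L(3) by auto
    have dom_L: "\<bar>(y - y') $ i\<bar> \<le> (real ?d + 2) ^ ?d * (\<Sum>j\<in>J. \<bar>(y - y') $ j\<bar>)"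
      if "y \<in> L" "y' \<in> L" for y y' i
    proof -
      have "y - a \<in> V" "y' - a \<in> V"
        using that by (auto simp: V_def)
      then have "(y - a) - (y' - a) \<in> V"
        by (rule subspace_diff[OF \<open>subspace V\<close>])
      then show ?thesis
        using dom[of "y - y'"] by simp
    qed
    have "3 * (real ?d + 2) ^ ?d * card J + 3 \<le> real R"
      using card_mono[of "UNIV :: 'n set" J] by (simp add: R_def mult_left_mono add.commute)
    then have "card {\<beta> \<in> ?T. restrict \<beta> J = \<gamma>} \<le> (2 * R + 1) ^ ?d" for \<gamma>
      using dom_L \<epsilon> by (intro card_tube_fibre_le) auto
    then have "card ?T \<le> card ((\<lambda>\<beta>. restrict \<beta> J) ` ?T) * (2 * R + 1) ^ ?d"
      by (intro card_le_card_image_mult finite_subset[OF _ finite_addresses[of n]])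
        (auto simp: dust_address_in_addresses)
    also have "card ((\<lambda>\<beta>. restrict \<beta> J) ` ?T) \<le> card (J \<rightarrow>\<^sub>E Pow {..<n})"
      by (intro card_mono finite_PiE) (auto simp: dust_address_def)
    also have "\<dots> \<le> 2 ^ (n * m)"
      using J by (simp add: card_PiE card_Pow power_mult[symmetric] mult.commute[of n])
    finally show ?thesis
      by (simp add: mult.commute)
  qed
  then show ?thesis
    by (rule that)
qed

section \<open>The exponents \<open>\<alpha>\<^sub>l\<close>\<close>

definition max_tube_measure :: "nat \<Rightarrow> ('a::euclidean_space set \<Rightarrow> ennreal) \<Rightarrow> real \<Rightarrow> ennreal" where
  "max_tube_measure l \<nu> \<epsilon> = (SUP L\<in>affine_subspaces (DIM('a) - l). \<nu> (nbhd L \<epsilon>))"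

lemma alpha_eq_Liminf_max_tube_measure:
  "alpha l \<nu> = Liminf (at_right 0) (\<lambda>\<epsilon>. ereal (ln (enn2real (max_tube_measure l \<nu> \<epsilon>)) / ln \<epsilon>))"
  by (simp add: alpha_def max_tube_measure_def)

definition cantor_dust_measure :: "(real ^ 'n::finite) set \<Rightarrow> ennreal" where
  "cantor_dust_measure A = hausdorff_measure (cantor_dust_dim CARD('n)) (A \<inter> cantor_dust)"

lemma cantor_dust_measure_tube_le:
  fixes L :: "(real ^ 'n::finite) set" and C :: nat
  assumes count: "card (dust_address n ` (nbhd L \<epsilon> \<inter> cantor_dust)) \<le> C * 2 ^ (n * (CARD('n) - l))"
    and "l \<le> CARD('n)" "0 < \<epsilon>" "1 / 3 ^ Suc n \<le> \<epsilon>"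
  shows "cantor_dust_measure (nbhd L \<epsilon>)
    \<le> ennreal (C * CARD('n) powr cantor_dust_dim CARD('n) * 3 powr cantor_dust_dim l * \<epsilon> powr cantor_dust_dim l)"
proof -
  let ?d = "CARD('n)" and ?s = "cantor_dust_dim CARD('n)" and ?e = "cantor_dust_dim l"
  let ?N = "card (dust_address n ` (nbhd L \<epsilon> \<inter> cantor_dust))"
  have "cantor_dust_measure (nbhd L \<epsilon>) \<le> ennreal (?N * ?d powr ?s / 2 ^ (n * ?d))"
    unfolding cantor_dust_measure_def by (rule hausdorff_measure_cantor_dust_le)
  also have "\<dots> \<le> ennreal (C * ?d powr ?s * 3 powr ?e * \<epsilon> powr ?e)"
  proof (rule ennreal_leI)
    have "?N * ?d powr ?s / 2 ^ (n * ?d) \<le> C * 2 ^ (n * (?d - l)) * ?d powr ?s / 2 ^ (n * ?d)"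
      using of_nat_mono[OF count] by (intro divide_right_mono mult_right_mono) auto
    also have "\<dots> = C * ?d powr ?s * (1 / 3 ^ n) powr ?e"
    proof -
      have "(2::real) ^ (n * ?d) = 2 ^ (n * (?d - l)) * 2 ^ (n * l)"
        using assms(2) by (simp flip: power_add add_mult_distrib2)
      then show ?thesis
        by (simp add: inverse_pow3_powr_cantor_dust_dim)
    qed
    also have "\<dots> \<le> C * ?d powr ?s * (3 * \<epsilon>) powr ?e"
      using assms(4) by (intro mult_left_mono powr_mono2) (auto simp: cantor_dust_dim_nonneg)
    also have "\<dots> = C * ?d powr ?s * 3 powr ?e * \<epsilon> powr ?e"
      using assms(3) by (simp add: powr_mult)
    finally show "?N * ?d powr ?s / 2 ^ (n * ?d) \<le> C * ?d powr ?s * 3 powr ?e * \<epsilon> powr ?e" .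
  qed
  finally show ?thesis .
qed

lemma max_tube_measure_cantor_dust_le:
  assumes "l \<le> CARD('n::finite)"
  obtains C where "\<And>\<epsilon>. 0 < \<epsilon> \<Longrightarrow> \<epsilon> < 1 \<Longrightarrow>
    max_tube_measure l (cantor_dust_measure :: (real ^ 'n) set \<Rightarrow> ennreal) \<epsilon> \<le> ennreal (C * \<epsilon> powr cantor_dust_dim l)"
proof -
  let ?d = "CARD('n)" and ?s = "cantor_dust_dim CARD('n)" and ?e = "cantor_dust_dim l"
  obtain C\<^sub>0 :: nat where count: "\<And>L m n \<epsilon>. affine L \<Longrightarrow> L \<noteq> {} \<Longrightarrow> aff_dim L = int m \<Longrightarrow> \<epsilon> \<le> 1 / 3 ^ n \<Longrightarrow>
    card (dust_address n ` (nbhd L \<epsilon> \<inter> (cantor_dust :: (real ^ 'n) set))) \<le> C\<^sub>0 * 2 ^ (n * m)"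
    by (rule card_tube_addresses_le) blast
  have "max_tube_measure l (cantor_dust_measure :: (real ^ 'n) set \<Rightarrow> ennreal) \<epsilon>
      \<le> ennreal (C\<^sub>0 * ?d powr ?s * 3 powr ?e * \<epsilon> powr ?e)" if \<epsilon>: "0 < \<epsilon>" "\<epsilon> < 1" for \<epsilon>
  proof -
    obtain n where n: "1 / 3 ^ Suc n \<le> \<epsilon>" "\<epsilon> < 1 / 3 ^ n"
      using exists_pow3_bracket[OF \<epsilon>] by blast
    show ?thesis
      unfolding max_tube_measure_def
    proof (rule SUP_least)
      fix L :: "(real ^ 'n) set"
      assume "L \<in> affine_subspaces (DIM(real ^ 'n) - l)"
      then have "affine L" "L \<noteq> {}" "aff_dim L = int (?d - l)"
        by (simp_all add: affine_subspaces_def)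
      with n show "cantor_dust_measure (nbhd L \<epsilon>) \<le> ennreal (C\<^sub>0 * ?d powr ?s * 3 powr ?e * \<epsilon> powr ?e)"
        using assms \<epsilon>(1) by (intro cantor_dust_measure_tube_le count) auto
    qed
  qed
  then show ?thesis
    using that[of "C\<^sub>0 * ?d powr ?s * 3 powr ?e"] by (simp add: mult.assoc)
qed

lemma address_cube_empty_subset_ball:
  "address_cube (n + Suc CARD('n)) (\<lambda>_. {}) \<subseteq> ball (0 :: real ^ 'n::finite) (1 / 3 ^ Suc n)"
proof
  let ?N = "n + Suc CARD('n)"
  fix x :: "real ^ 'n"
  assume x: "x \<in> address_cube ?N (\<lambda>_. {})"
  have "0 \<in> address_cube ?N (\<lambda>_::'n. {})"
    by (simp add: address_cube_def)
  then have "dist 0 x \<le> CARD('n) / 3 ^ ?N"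
    using x by (rule dist_le_in_address_cube)
  also have "\<dots> = (CARD('n) / 3 ^ CARD('n)) * (1 / 3 ^ Suc n)"
    by (simp add: power_add)
  also have "\<dots> < 1 / 3 ^ Suc n"
  proof -
    have "CARD('n) < (2::nat) ^ CARD('n)"
      by (rule less_exp)
    also have "\<dots> \<le> 3 ^ CARD('n)"
      by (rule power_mono) auto
    finally have "real CARD('n) < 3 ^ CARD('n)"
      by (metis of_nat_less_iff of_nat_numeral of_nat_power)
    then have "CARD('n) / 3 ^ CARD('n) < (1::real)"
      by simp
    then show ?thesis
      using mult_strict_right_mono[of "CARD('n) / 3 ^ CARD('n)" 1 "1 / 3 ^ Suc n"] by simp
  qed
  finally show "x \<in> ball 0 (1 / 3 ^ Suc n)"
    by simp
qed

lemma cantor_dust_measure_ball_ge: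
  defines "s \<equiv> cantor_dust_dim CARD('n::finite)"
  assumes "0 < \<epsilon>" "\<epsilon> < 1"
  shows "ennreal (\<epsilon> powr s / (2 ^ (Suc CARD('n) * CARD('n)) * 2 ^ CARD('n) * 4 powr s))
    \<le> cantor_dust_measure (ball (0 :: real ^ 'n) \<epsilon>)"
proof -
  let ?d = "CARD('n)"
  obtain n where n: "1 / 3 ^ Suc n \<le> \<epsilon>" "\<epsilon> < 1 / 3 ^ n"
    using exists_pow3_bracket[OF assms(2,3)] by blast
  let ?N = "n + Suc ?d"
  have "\<epsilon> powr s / (2 ^ (Suc ?d * ?d) * 2 ^ ?d * 4 powr s) \<le> (1 / 3 ^ n) powr s / (2 ^ (Suc ?d * ?d) * 2 ^ ?d * 4 powr s)"
    using n(2) assms(2) by (intro divide_right_mono powr_mono2) (auto simp: s_def cantor_dust_dim_nonneg)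
  also have "\<dots> = 1 / (2 ^ (?N * ?d) * 2 ^ ?d * 4 powr s)"
    by (simp add: s_def inverse_pow3_powr_cantor_dust_dim power_add add_mult_distrib)
  finally have "ennreal (\<epsilon> powr s / (2 ^ (Suc ?d * ?d) * 2 ^ ?d * 4 powr s))
      \<le> ennreal (1 / (2 ^ (?N * ?d) * 2 ^ ?d * 4 powr s))"
    by (rule ennreal_leI)
  also have "\<dots> \<le> hausdorff_measure s (cantor_dust \<inter> address_cube ?N (\<lambda>_::'n. {}))"
    using hausdorff_measure_cantor_cube_ge[of "\<lambda>_::'n. {}" ?N] by (simp add: s_def addresses_def)
  also have "\<dots> \<le> cantor_dust_measure (ball (0 :: real ^ 'n) \<epsilon>)"
    unfolding cantor_dust_measure_def s_def using address_cube_empty_subset_ball[of n] n(1)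
    by (intro hausdorff_measure_mono) auto
  finally show ?thesis .
qed

lemma max_tube_measure_cantor_dust_ge:
  assumes "l \<le> CARD('n::finite)"
  obtains c where "0 < c" "\<And>\<epsilon>. 0 < \<epsilon> \<Longrightarrow> \<epsilon> < 1 \<Longrightarrow>
    ennreal (c * \<epsilon> powr cantor_dust_dim CARD('n)) \<le> max_tube_measure l (cantor_dust_measure :: (real ^ 'n) set \<Rightarrow> ennreal) \<epsilon>"
proof -
  let ?d = "CARD('n)" and ?s = "cantor_dust_dim CARD('n)"
  define c where "c = 1 / (2 ^ (Suc ?d * ?d) * 2 ^ ?d * 4 powr ?s)"
  obtain T :: "(real ^ 'n) set" where T: "subspace T" "dim T = ?d - l"
    using choose_subspace_of_subspace[of "?d - l" "UNIV :: (real ^ 'n) set"] by (auto simp: dim_UNIV)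
  then have T_in: "T \<in> affine_subspaces (DIM(real ^ 'n) - l)"
    using subspace_0[OF T(1)] by (auto simp: affine_subspaces_def subspace_imp_affine aff_dim_subspace)
  have "ennreal (c * \<epsilon> powr ?s) \<le> max_tube_measure l (cantor_dust_measure :: (real ^ 'n) set \<Rightarrow> ennreal) \<epsilon>"
    if "0 < \<epsilon>" "\<epsilon> < 1" for \<epsilon>
  proof -
    have "ennreal (c * \<epsilon> powr ?s) \<le> cantor_dust_measure (ball (0 :: real ^ 'n) \<epsilon>)"
      using cantor_dust_measure_ball_ge[OF that] by (simp add: c_def)
    also have "\<dots> \<le> cantor_dust_measure (nbhd T \<epsilon>)"
      unfolding cantor_dust_measure_def using subspace_0[OF T(1)]
      by (intro hausdorff_measure_mono) (auto simp: nbhd_def)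
    also have "\<dots> \<le> max_tube_measure l (cantor_dust_measure :: (real ^ 'n) set \<Rightarrow> ennreal) \<epsilon>"
      unfolding max_tube_measure_def using T_in by (rule SUP_upper)
    finally show ?thesis .
  qed
  moreover have "0 < c"
    by (simp add: c_def)
  ultimately show ?thesis
    using that by blast
qed

lemma alpha_cantor_dust_ge:
  assumes "l \<le> CARD('n::finite)"
  shows "ereal (cantor_dust_dim l) \<le> alpha l (cantor_dust_measure :: (real ^ 'n) set \<Rightarrow> ennreal)"
proof -
  let ?\<Phi> = "max_tube_measure l (cantor_dust_measure :: (real ^ 'n) set \<Rightarrow> ennreal)"
  obtain C where C: "\<And>\<epsilon>. 0 < \<epsilon> \<Longrightarrow> \<epsilon> < 1 \<Longrightarrow> ?\<Phi> \<epsilon> \<le> ennreal (C * \<epsilon> powr cantor_dust_dim l)"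
    using max_tube_measure_cantor_dust_le[OF assms] by blast
  obtain c where c: "0 < c" "\<And>\<epsilon>. 0 < \<epsilon> \<Longrightarrow> \<epsilon> < 1 \<Longrightarrow> ennreal (c * \<epsilon> powr cantor_dust_dim CARD('n)) \<le> ?\<Phi> \<epsilon>"
    using max_tube_measure_cantor_dust_ge[OF assms] by blast
  show ?thesis
    unfolding alpha_eq_Liminf_max_tube_measure
  proof (rule Liminf_ln_div_ln_ge)
    fix \<epsilon> :: real
    assume \<epsilon>: "0 < \<epsilon>" "\<epsilon> < 1"
    have "0 < ennreal (c * \<epsilon> powr cantor_dust_dim CARD('n))"
      using c(1) \<epsilon>(1) by simp
    also have "\<dots> \<le> ?\<Phi> \<epsilon>"
      by (rule c(2)[OF \<epsilon>])
    finally have pos: "0 < ?\<Phi> \<epsilon>" .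
    have upper: "?\<Phi> \<epsilon> \<le> ennreal (C * \<epsilon> powr cantor_dust_dim l)"
      by (rule C[OF \<epsilon>])
    then have "?\<Phi> \<epsilon> < top"
      by (simp add: le_less_trans)
    moreover have "0 < C * \<epsilon> powr cantor_dust_dim l"
      using order.strict_trans2[OF pos upper] by simp
    ultimately show "0 < enn2real (?\<Phi> \<epsilon>) \<and> enn2real (?\<Phi> \<epsilon>) \<le> C * \<epsilon> powr cantor_dust_dim l"
      using pos enn2real_mono[OF upper] by (simp add: enn2real_positive_iff)
  qed
qed

lemma alpha_cantor_dust_top:
  "alpha CARD('n::finite) (cantor_dust_measure :: (real ^ 'n) set \<Rightarrow> ennreal) = cantor_dust_dim CARD('n)"
proof (rule antisym)
  let ?\<Phi> = "max_tube_measure CARD('n) (cantor_dust_measure :: (real ^ 'n) set \<Rightarrow> ennreal)"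
  obtain C where C: "\<And>\<epsilon>. 0 < \<epsilon> \<Longrightarrow> \<epsilon> < 1 \<Longrightarrow> ?\<Phi> \<epsilon> \<le> ennreal (C * \<epsilon> powr cantor_dust_dim CARD('n))"
    using max_tube_measure_cantor_dust_le[OF order_refl] by blast
  obtain c where c: "0 < c" "\<And>\<epsilon>. 0 < \<epsilon> \<Longrightarrow> \<epsilon> < 1 \<Longrightarrow> ennreal (c * \<epsilon> powr cantor_dust_dim CARD('n)) \<le> ?\<Phi> \<epsilon>"
    using max_tube_measure_cantor_dust_ge[OF order_refl] by blast
  show "alpha CARD('n) (cantor_dust_measure :: (real ^ 'n) set \<Rightarrow> ennreal) \<le> cantor_dust_dim CARD('n)"
    unfolding alpha_eq_Liminf_max_tube_measure
  proof (rule Liminf_ln_div_ln_le[OF _ c(1)])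
    fix \<epsilon> :: real
    assume \<epsilon>: "0 < \<epsilon>" "\<epsilon> < 1"
    have "?\<Phi> \<epsilon> < top"
      using C[OF \<epsilon>] by (simp add: le_less_trans)
    then show "c * \<epsilon> powr cantor_dust_dim CARD('n) \<le> enn2real (?\<Phi> \<epsilon>)"
      using enn2real_mono[OF c(2)[OF \<epsilon>]] c(1) by simp
  qed
  show "ereal (cantor_dust_dim CARD('n)) \<le> alpha CARD('n) (cantor_dust_measure :: (real ^ 'n) set \<Rightarrow> ennreal)"
    by (rule alpha_cantor_dust_ge) simp
qed

lemma cantor_dust_dim_le_mult:
  assumes "1 \<le> l" "l \<le> d"
  shows "cantor_dust_dim d \<le> cantor_dust_dim l * real (d - l + 1)"
proof -
  have "0 \<le> (real l - 1) * (real d - real l)"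
    using assms by simp
  then have "real d \<le> real l * real (d - l + 1)"
    using assms by (simp add: of_nat_diff algebra_simps)
  then show ?thesis
    unfolding cantor_dust_dim_def by (simp add: divide_right_mono mult_right_mono)
qed

lemma alpha_cantor_dust_weighted_ge:
  assumes "l \<in> {1..CARD('n::finite)}"
  shows "ereal (cantor_dust_dim CARD('n))
    \<le> alpha l (cantor_dust_measure :: (real ^ 'n) set \<Rightarrow> ennreal) * ereal (real (CARD('n) - l + 1))"
proof -
  have "ereal (cantor_dust_dim CARD('n)) \<le> ereal (cantor_dust_dim l) * ereal (real (CARD('n) - l + 1))"
    using assms cantor_dust_dim_le_mult[of l "CARD('n)"] by simp
  also have "\<dots> \<le> alpha l (cantor_dust_measure :: (real ^ 'n) set \<Rightarrow> ennreal) * ereal (real (CARD('n) - l + 1))"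
    using assms by (intro ereal_mult_right_mono alpha_cantor_dust_ge) auto
  finally show ?thesis .
qed

theorem mainTheorem2:
  fixes K :: "(real ^ 'n) set" and s :: real and \<mu> :: "(real ^ 'n) set \<Rightarrow> ennreal"
  assumes "K = cantor_dust"
    and "s = hausdorff_dim K"
    and "\<mu> = (\<lambda>A. hausdorff_measure s (A \<inter> K))"
  shows "(MIN l\<in>{1..CARD('n)}. alpha l \<mu> * ereal (real (CARD('n) - l + 1))) = ereal s
         \<and> s = real CARD('n) * ln 2 / ln 3"
proof -
  have s: "s = cantor_dust_dim CARD('n)"
    using assms(1,2) hausdorff_dim_cantor_dust by simp
  have \<mu>: "\<mu> = cantor_dust_measure"
    using assms(1,3) s by (simp add: fun_eq_iff cantor_dust_measure_def)
  have "(MIN l\<in>{1..CARD('n)}. alpha l \<mu> * ereal (real (CARD('n) - l + 1))) = ereal s"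
    unfolding \<mu> s using alpha_cantor_dust_weighted_ge[where 'n = 'n]
    by (intro Min_eqI) (auto simp: alpha_cantor_dust_top intro!: image_eqI[where x = "CARD('n)"])
  with s show ?thesis
    by (simp add: cantor_dust_dim_def)
qed

end
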